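(* In the linear setting of the context, suppose $f(\phi_{\min})<0$. Then the unique steady state $(\mathbf c^*,v^* )$ of the linear pump-leak system is asymptotically stable on $\mathcal S$, solutions starting in $\mathcal S$ sufficiently close to it converge to it exponentially fast, and the linearization of the system, regarded as an $N$-dimensional ODE on the manifold $\mathcal S$, at the steady state is diagonalizable with real negative eigenvalues.
   Context: Fix an integer $N\ge2$, real valences $z_1,\dots,z_N$ not all zero, $\mathbf z=(z_k)$, positive constants $c_k^{\rm e}$ with $\sum_kz_kc_k^{\rm e}=0$, $A>0$, $z\in\mathbb R$. Let $L$ be a real symmetric positive definite $N\times N$ matrix, $\mathbf p\in\mathbb R^N$ constant, $\zeta>0$, $\mathbf q=L^{-1}\mathbf p$, $f(\phi)=\sum_kc_k^{\rm e}(\exp(-q_k-z_k\phi)-1)$ with unique minimizer $\phi_{\min}$. For $\mathbf c\in(0,\infty)^N,v>0,\phi\in\mathbb R$: $\gamma_k=\ln(c_k/c_k^{\rm e})$, $\mu_k=\gamma_k+z_k\phi$, $\pi_{\rm w}=\sum_kc_k^{\rm e}-(\sum_kc_k+A/v)$. The linear pump-leak system is $\frac{d}{dt}(v\mathbf c)=-L\boldsymbol\mu-\mathbf p$, $0=\sum_kz_kc_k+zA/v$, $\frac{dv}{dt}=-\zeta\pi_{\rm w}$. Eliminating $\phi=-\langle\mathbf z,L\boldsymbol\gamma+\mathbf p\rangle/\langle\mathbf z,L\mathbf z\rangle$ it becomes an ODE for $(\mathbf c,v)$ on $\mathcal S=\{(\mathbf c,v)\in(0,\infty)^{N+1}:\sum_kz_kc_k+zA/v=0\}$,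 an $N$-dimensional manifold. A steady state is a point of $\mathcal S$ (with the corresponding $\phi$) where $L\boldsymbol\mu+\mathbf p=0$ and $\pi_{\rm w}=0$. It is stable if for every $\varepsilon>0$ there is $\delta>0$ such that every solution with initial value in $\mathcal S$ within distance $\delta$ of it stays within distance $\varepsilon$ for all $t\ge0$; asymptotically stable if moreover all solutions with initial value in $\mathcal S$ sufficiently close converge to it as $t\to\infty$. *)

theory Defs
  imports "HOL-Analysis.Analysis"
begin

text \<open>Ion index type 'n (N = CARD('n)), concentrations
  c :: real^'n, volume v :: real; a state is a pair (c, v) in R^N x R = R^(N+1)
  with the Euclidean (product) metric.  Parameters: valences z, equilibrium
  concentrations ce, impermeant amount A, impermeant valence zi, matrix L,
  pump vector p, water permeability zeta.\<close>

definition vsum :: "real^'n \<Rightarrow> real" where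
  "vsum c = (\<Sum>k\<in>UNIV. c $ k)"

definition gam :: "real^'n \<Rightarrow> real^'n \<Rightarrow> real^'n" where
  "gam ce c = (\<chi> k. ln (c $ k / ce $ k))"

definition phiE :: "real^'n \<Rightarrow> real^'n \<Rightarrow> real^'n^'n \<Rightarrow> real^'n \<Rightarrow> real^'n \<Rightarrow> real" where
  "phiE z ce L p c = - (z \<bullet> (L *v gam ce c + p)) / (z \<bullet> (L *v z))"

definition muv :: "real^'n \<Rightarrow> real^'n \<Rightarrow> real \<Rightarrow> real^'n \<Rightarrow> real^'n" where
  "muv z ce phi c = gam ce c + phi *\<^sub>R z"

definition piw :: "real^'n \<Rightarrow> real \<Rightarrow> real^'n \<Rightarrow> real \<Rightarrow> real" where
  "piw ce A c v = vsum ce - (vsum c + A / v)"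

definition PLdom :: "((real^'n) \<times> real) set" where
  "PLdom = {(c, v). (\<forall>k. 0 < c $ k) \<and> 0 < v}"

text \<open>The manifold S (electroneutrality constraint).\<close>
definition PLS :: "real^'n \<Rightarrow> real \<Rightarrow> real \<Rightarrow> ((real^'n) \<times> real) set" where
  "PLS z A zi = {(c, v) \<in> PLdom. z \<bullet> c + zi * A / v = 0}"

text \<open>Vector field of the ODE for (c, v) obtained from
  d/dt (v c) = - L mu - p,  dv/dt = - zeta pi_w, after eliminating phi:
  c' = (- L mu - p - v' c) / v.\<close>
definition PLfield :: "real^'n \<Rightarrow> real^'n \<Rightarrow> real \<Rightarrow> real^'n^'n \<Rightarrow> real^'n \<Rightarrow> real
    \<Rightarrow> (real^'n) \<times> real \<Rightarrow> (real^'n) \<times> real" where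
  "PLfield z ce A L p zeta = (\<lambda>(c, v).
     let phi = phiE z ce L p c; pw = piw ce A c v in
     ((1 / v) *\<^sub>R (- (L *v muv z ce phi c) - p + (zeta * pw) *\<^sub>R c), - zeta * pw))"

definition PLsteady :: "real^'n \<Rightarrow> real^'n \<Rightarrow> real \<Rightarrow> real \<Rightarrow> real^'n^'n \<Rightarrow> real^'n
    \<Rightarrow> (real^'n) \<times> real \<Rightarrow> bool" where
  "PLsteady z ce A zi L p s = (case s of (c, v) \<Rightarrow>
     s \<in> PLS z A zi \<and> L *v muv z ce (phiE z ce L p c) c + p = 0 \<and> piw ce A c v = 0)"

definition is_sol_on :: "('a::real_normed_vector \<Rightarrow> 'a) \<Rightarrow> 'a set \<Rightarrow> real set \<Rightarrow> (real \<Rightarrow> 'a) \<Rightarrow> bool" where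
  "is_sol_on F D I x = (\<forall>t\<in>I. x t \<in> D \<and> (x has_vector_derivative F (x t)) (at t within I))"

definition fwd_interval :: "real set \<Rightarrow> bool" where
  "fwd_interval I = (I = {0..} \<or> (\<exists>T>0. I = {0..<T}))"

definition stable_on :: "('a::real_normed_vector \<Rightarrow> 'a) \<Rightarrow> 'a set \<Rightarrow> 'a set \<Rightarrow> 'a \<Rightarrow> bool" where
  "stable_on F D S s = (\<forall>\<epsilon>>0. \<exists>\<delta>>0. \<forall>I x. fwd_interval I \<longrightarrow> is_sol_on F D I x \<longrightarrow>
      x 0 \<in> S \<longrightarrow> dist (x 0) s < \<delta> \<longrightarrow> (\<forall>t\<in>I. dist (x t) s < \<epsilon>))"

definition asymp_stable_on :: "('a::real_normed_vector \<Rightarrow> 'a) \<Rightarrow> 'a set \<Rightarrow> 'a set \<Rightarrow> 'a \<Rightarrow> bool" where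
  "asymp_stable_on F D S s = (stable_on F D S s \<and>
     (\<exists>\<delta>>0. \<forall>x. is_sol_on F D {0..} x \<longrightarrow> x 0 \<in> S \<longrightarrow> dist (x 0) s < \<delta> \<longrightarrow>
        (x \<longlongrightarrow> s) at_top))"

definition exp_convergent_on :: "('a::real_normed_vector \<Rightarrow> 'a) \<Rightarrow> 'a set \<Rightarrow> 'a set \<Rightarrow> 'a \<Rightarrow> bool" where
  "exp_convergent_on F D S s = (\<exists>\<delta>>0. \<exists>C \<kappa>. \<kappa> > 0 \<and>
     (\<forall>I x. fwd_interval I \<longrightarrow> is_sol_on F D I x \<longrightarrow> x 0 \<in> S \<longrightarrow> dist (x 0) s < \<delta> \<longrightarrow>
        (\<forall>t\<in>I. dist (x t) s \<le> C * exp (- \<kappa> * t) * dist (x 0) s)))"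

text \<open>Tangent space of S at (c, v): kernel of the derivative of the constraint
  g(c, v) = z . c + zi * A / v.\<close>
definition PLtangent :: "real^'n \<Rightarrow> real \<Rightarrow> real \<Rightarrow> (real^'n) \<times> real \<Rightarrow> ((real^'n) \<times> real) set" where
  "PLtangent z A zi s = {(dc, dv). z \<bullet> dc - zi * A / (snd s)\<^sup>2 * dv = 0}"

definition diag_neg_on :: "('a::real_vector \<Rightarrow> 'a) \<Rightarrow> 'a set \<Rightarrow> bool" where
  "diag_neg_on M T = (M ` T \<subseteq> T \<and>
     (\<exists>B. B \<subseteq> T \<and> independent B \<and> span B = T \<and> (\<forall>b\<in>B. \<exists>r<0. M b = r *\<^sub>R b)))"

definition fPL :: "real^'n \<Rightarrow> real^'n \<Rightarrow> real^'n^'n \<Rightarrow> real^'n \<Rightarrow> real \<Rightarrow> real" where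
  "fPL z ce L p phi = (\<Sum>k\<in>UNIV. ce $ k * (exp (- (matrix_inv L *v p) $ k - z $ k * phi) - 1))"

definition phi_min :: "real^'n \<Rightarrow> real^'n \<Rightarrow> real^'n^'n \<Rightarrow> real^'n \<Rightarrow> real" where
  "phi_min z ce L p = (THE phi. \<forall>psi. fPL z ce L p phi \<le> fPL z ce L p psi)"

end

theory Submission
  imports Defs "HOL-Real_Asymp.Real_Asymp"
begin

text \<open>Every steady state has Boltzmann concentrations
  \<open>c\<^sub>k = c\<^sup>e\<^sub>k e\<^sup>-\<^sup>q\<^sup>_\<^sup>k\<^sup>-\<^sup>z\<^sup>_\<^sup>k\<^sup>\<phi>\<close> (\<open>q = L\<^sup>-\<^sup>1 p\<close>), and the remaining conditions reduce to
  \<open>F(\<phi>) < 0\<close>, \<open>F'(\<phi>) + z\<^sub>0 F(\<phi>) = 0\<close>, \<open>v = -A / F(\<phi>)\<close> for the convex function \<open>F = f\<close>.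
  A root exists (minimise \<open>e\<^sup>z\<^sup>_\<^sup>0\<^sup>\<phi> F\<close> between zeros of \<open>F\<close>) and is unique (\<open>F'/F\<close> is strictly
  decreasing where \<open>F < 0\<close>).

  For the weighted inner product
  \<open>\<langle>u, w\<rangle>\<^sub>W = v\<^sub>s \<Sum> u\<^sub>k w\<^sub>k / c\<^sub>s\<^sub>k + A u\<^sub>v w\<^sub>v / v\<^sub>s\<^sup>2\<close> the derivative \<open>Lin\<close> of the field is symmetric
  and negative definite on the tangent space of \<open>S\<close>, which it preserves; a spectral theorem
  for such operators (proved via the Rayleigh quotient) yields a basis of eigenvectors with
  negative eigenvalues.

  Solutions starting on \<open>S\<close> stay on \<open>S\<close> (conservation of charge).  Near the
  steady state on \<open>S\<close>, \<open>V = \<parallel>x - x\<^sub>s\<parallel>\<^sub>W\<^sup>2\<close> satisfies \<open>V' \<le> -\<kappa> V\<close>, since the normal component of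
  \<open>x - x\<^sub>s\<close> is quadratically small.  A Gronwall-type argument gives exponential decay, and
  an exponential bound implies asymptotic stability and exponential convergence.\<close>

section \<open>Self-adjoint operators for a weighted inner product\<close>

text \<open>A real quadratic polynomial without constant term that is nowhere positive has no
  linear term: this is the first-order optimality condition used for the Rayleigh quotient.\<close>
lemma nonpos_quadratic_linear_coeff:
  fixes a b :: real
  assumes nonpos: "\<And>t. a * t + b * t\<^sup>2 \<le> 0"
  shows "a = 0"
proof (rule ccontr)
  assume "a \<noteq> 0"
  define d where "d = 2 * (\<bar>b\<bar> + 1)"
  have d: "0 < d" "\<bar>b\<bar> \<le> d / 2" unfolding d_def by simp_all
  define t where "t = a / d"
  have at: "0 < a * t" unfolding t_def using \<open>a \<noteq> 0\<close> d by (simp add: power2_eq_square[symmetric])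
  have "\<bar>b\<bar> * t\<^sup>2 = (a * t) * (\<bar>b\<bar> / d)"
    unfolding t_def using d by (simp add: power2_eq_square)
  also have "\<dots> \<le> (a * t) * (1 / 2)"
    using at d by (intro mult_left_mono) (simp_all add: divide_le_eq)
  finally have "\<bar>b\<bar> * t\<^sup>2 \<le> a * t / 2" by simp
  moreover have "- \<bar>b\<bar> * t\<^sup>2 \<le> b * t\<^sup>2"
    by (rule mult_right_mono) auto
  ultimately have "0 < a * t + b * t\<^sup>2" using at by linarith
  then show False using nonpos[of t] by linarith
qed

text \<open>Throughout this section the inner product on \<open>'a\<close> is replaced by the one pulled
  back along an injective linear map \<open>W\<close>, i.e. \<open>\<langle>x, y\<rangle>\<^sub>W = W x \<bullet> W y\<close>.\<close>
lemma rayleigh_quotient_max: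
  fixes M :: "'a::euclidean_space \<Rightarrow> 'a" and W :: "'a \<Rightarrow> 'b::euclidean_space"
  assumes lM: "linear M" and lW: "linear W" and iW: "\<And>x. W x = 0 \<Longrightarrow> x = 0"
    and sT: "subspace T" and x1: "x1 \<in> T" "x1 \<noteq> 0"
  obtains lam x0 where "x0 \<in> T" "x0 \<noteq> 0" "W (M x0) \<bullet> W x0 = lam * (W x0 \<bullet> W x0)"
    "\<And>u. u \<in> T \<Longrightarrow> W (M u) \<bullet> W u \<le> lam * (W u \<bullet> W u)"
proof -
  define K where "K = T \<inter> sphere 0 1"
  define f where "f x = (W (M x) \<bullet> W x) / (W x \<bullet> W x)" for x
  have cK: "compact K" unfolding K_def
    by (metis Int_commute closed_subspace compact_Int_closed compact_sphere sT)
  have "x1 /\<^sub>R norm x1 \<in> K" using x1 sT unfolding K_def by (simp add: subspace_scale)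
  then have Kne: "K \<noteq> {}" by blast
  have cW: "continuous_on UNIV W" and cM: "continuous_on UNIV M"
    using lW lM linear_continuous_on linear_conv_bounded_linear by auto
  have Wpos: "W x \<bullet> W x > 0" if "x \<noteq> 0" for x
    using iW that by auto
  have "continuous_on K f" unfolding f_def
    apply (rule continuous_on_divide)
      apply (intro continuous_intros continuous_on_compose2[OF cW] continuous_on_compose2[OF cM]; auto)
     apply (intro continuous_intros continuous_on_compose2[OF cW]; auto)
    using Wpos unfolding K_def by (metis IntD2 less_irrefl mem_sphere_0 norm_zero zero_neq_one)
  then obtain x0 where x0K: "x0 \<in> K" and x0max: "\<forall>y\<in>K. f y \<le> f x0"
    using continuous_attains_sup[OF cK Kne] by blast
  have x0: "x0 \<in> T" "x0 \<noteq> 0" using x0K unfolding K_def by auto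
  have scl: "W (M (c *\<^sub>R u)) = c *\<^sub>R W (M u)" "W (c *\<^sub>R u) = c *\<^sub>R W u" for c u
    using lW lM by (simp_all add: linear_scale)
  have "W (M u) \<bullet> W u \<le> f x0 * (W u \<bullet> W u)" if uT: "u \<in> T" for u
  proof (cases "u = 0")
    case True then show ?thesis using lW lM by (simp add: linear_0)
  next
    case False
    have "u /\<^sub>R norm u \<in> K" using uT False sT unfolding K_def by (simp add: subspace_scale)
    then have "f (u /\<^sub>R norm u) \<le> f x0" using x0max by auto
    moreover have "f (u /\<^sub>R norm u) = f u"
      unfolding f_def scl using False by (simp add: power2_eq_square)
    ultimately show ?thesis unfolding f_def using Wpos[OF False] by (simp add: divide_le_eq)
  qed
  moreover have "W (M x0) \<bullet> W x0 = f x0 * (W x0 \<bullet> W x0)"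
    unfolding f_def using Wpos[OF x0(2)] by simp
  ultimately show ?thesis using that x0 by blast
qed

text \<open>A \<open>W\<close>-self-adjoint operator leaving a nonzero subspace \<open>T\<close> invariant has an
  eigenvector in \<open>T\<close>: a maximiser of the Rayleigh quotient.\<close>
lemma selfadjoint_eigenvector_exists:
  fixes M :: "'a::euclidean_space \<Rightarrow> 'a" and W :: "'a \<Rightarrow> 'b::euclidean_space"
  assumes lM: "linear M" and lW: "linear W" and iW: "\<And>x. W x = 0 \<Longrightarrow> x = 0"
    and sT: "subspace T" and MT: "M ` T \<subseteq> T"
    and sym: "\<forall>x\<in>T. \<forall>y\<in>T. W (M x) \<bullet> W y = W x \<bullet> W (M y)"
    and x1: "x1 \<in> T" "x1 \<noteq> 0"
  obtains x0 lam where "x0 \<in> T" "x0 \<noteq> 0" "M x0 = lam *\<^sub>R x0"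
proof -
  obtain lam x0 where x0: "x0 \<in> T" "x0 \<noteq> 0" and eq0: "W (M x0) \<bullet> W x0 = lam * (W x0 \<bullet> W x0)"
    and le: "\<And>u. u \<in> T \<Longrightarrow> W (M u) \<bullet> W u \<le> lam * (W u \<bullet> W u)"
    using rayleigh_quotient_max[OF lM lW iW sT x1] by metis
  define y where "y = M x0 - lam *\<^sub>R x0"
  have yT: "y \<in> T" unfolding y_def using MT x0 sT
    by (meson image_subset_iff subspace_diff subspace_scale)
  define a where "a = W x0"
  define b where "b = W y"
  define ma where "ma = W (M x0)"
  define mb where "mb = W (M y)"
  have ma: "ma = lam *\<^sub>R a + b" unfolding ma_def a_def b_def y_def using lW
    by (simp add: linear_diff linear_scale)
  have symab: "mb \<bullet> a = b \<bullet> ma" unfolding mb_def a_def b_def ma_def using sym yT x0 by auto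
  txt \<open>The quadratic form \<open>\<langle>M u, u\<rangle>\<^sub>W - lam \<langle>u, u\<rangle>\<^sub>W\<close> is \<open>\<le> 0\<close> on \<open>T\<close> and vanishes at
    \<open>x0\<close>; along the line \<open>x0 + t y\<close> its linear coefficient is \<open>2 \<langle>y, y\<rangle>\<^sub>W\<close>.\<close>
  have "2 * (b \<bullet> b) * t + (mb \<bullet> b - lam * (b \<bullet> b)) * t\<^sup>2 \<le> 0" for t
  proof -
    have uT: "x0 + t *\<^sub>R y \<in> T" using x0 yT sT by (simp add: subspace_add subspace_scale)
    have WM: "W (M (x0 + t *\<^sub>R y)) = ma + t *\<^sub>R mb" "W (x0 + t *\<^sub>R y) = a + t *\<^sub>R b"
      unfolding ma_def mb_def a_def b_def using lW lM by (simp_all add: linear_add linear_scale)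
    have "(ma + t *\<^sub>R mb) \<bullet> (a + t *\<^sub>R b) \<le> lam * ((a + t *\<^sub>R b) \<bullet> (a + t *\<^sub>R b))"
      using le[OF uT] unfolding WM .
    moreover have "ma \<bullet> a = lam * (a \<bullet> a)" using eq0 unfolding ma_def a_def .
    moreover have "(ma + t *\<^sub>R mb) \<bullet> (a + t *\<^sub>R b)
        = ma \<bullet> a + t * (ma \<bullet> b) + t * (mb \<bullet> a) + t * t * (mb \<bullet> b)"
      by (simp add: inner_add_left inner_add_right algebra_simps)
    moreover have "(a + t *\<^sub>R b) \<bullet> (a + t *\<^sub>R b) = a \<bullet> a + 2 * t * (a \<bullet> b) + t * t * (b \<bullet> b)"
      by (simp add: inner_add_left inner_add_right algebra_simps inner_commute)
    moreover have "ma \<bullet> b = lam * (a \<bullet> b) + b \<bullet> b" unfolding ma by (simp add: inner_add_left)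
    moreover have "mb \<bullet> a = lam * (a \<bullet> b) + b \<bullet> b"
      unfolding symab ma by (simp add: inner_add_right inner_commute)
    ultimately show ?thesis by (simp add: power2_eq_square algebra_simps inner_commute)
  qed
  then have "b \<bullet> b = 0" using nonpos_quadratic_linear_coeff by force
  then have "y = 0" using iW unfolding b_def by simp
  then have "M x0 = lam *\<^sub>R x0" unfolding y_def by simp
  then show ?thesis using that x0 by blast
qed

lemma selfadjoint_split_eigenvector:
  fixes M :: "'a::euclidean_space \<Rightarrow> 'a" and W :: "'a \<Rightarrow> 'b::euclidean_space"
  assumes lW: "linear W" and iW: "\<And>x. W x = 0 \<Longrightarrow> x = 0"
    and sT: "subspace T" and MT: "M ` T \<subseteq> T"
    and sym: "\<forall>x\<in>T. \<forall>y\<in>T. W (M x) \<bullet> W y = W x \<bullet> W (M y)"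
    and x0: "x0 \<in> T" "x0 \<noteq> 0" and eig: "M x0 = l *\<^sub>R x0"
  defines "T' \<equiv> {y \<in> T. W x0 \<bullet> W y = 0}"
  shows "subspace T'" "M ` T' \<subseteq> T'" "T' \<subseteq> T" "x0 \<notin> T'" "dim T' < dim T"
    "T \<subseteq> span (insert x0 T')"
proof -
  have Wpos: "W x0 \<bullet> W x0 > 0" using iW x0(2) by auto
  show sT': "subspace T'" unfolding T'_def subspace_def using sT lW
    by (simp add: subspace_0 subspace_add subspace_scale linear_add linear_scale linear_0 inner_add_right)
  show "M ` T' \<subseteq> T'"
  proof
    fix u assume "u \<in> M ` T'"
    then obtain y where y: "y \<in> T'" "u = M y" by blast
    have "W x0 \<bullet> W (M y) = W (M x0) \<bullet> W y" using sym x0 y(1) unfolding T'_def by auto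
    also have "\<dots> = l * (W x0 \<bullet> W y)" unfolding eig using lW by (simp add: linear_scale)
    also have "\<dots> = 0" using y(1) unfolding T'_def by simp
    finally show "u \<in> T'" using y MT unfolding T'_def by auto
  qed
  show T'T: "T' \<subseteq> T" unfolding T'_def by auto
  show x0T': "x0 \<notin> T'" unfolding T'_def using Wpos by simp
  show "dim T' < dim T"
  proof (rule dim_psubset)
    have "span T' = T'" and "span T = T" using sT sT' span_eq_iff by blast+
    then show "span T' \<subset> span T" using T'T x0 x0T' by blast
  qed
  show "T \<subseteq> span (insert x0 T')"
  proof
    fix t assume tT: "t \<in> T"
    define c where "c = (W x0 \<bullet> W t) / (W x0 \<bullet> W x0)"
    have "W x0 \<bullet> W (t - c *\<^sub>R x0) = W x0 \<bullet> W t - c * (W x0 \<bullet> W x0)"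
      using lW by (simp add: linear_diff linear_scale inner_diff_right)
    also have "\<dots> = 0" unfolding c_def using Wpos by simp
    finally have "t - c *\<^sub>R x0 \<in> T'" unfolding T'_def using tT x0 sT
      by (simp add: subspace_diff subspace_scale)
    then have "(t - c *\<^sub>R x0) + c *\<^sub>R x0 \<in> span (insert x0 T')"
      by (intro span_add span_scale) (auto intro: span_base)
    then show "t \<in> span (insert x0 T')" by simp
  qed
qed

lemma selfadjoint_negdef_diagonalizable:
  fixes M :: "'a::euclidean_space \<Rightarrow> 'a" and W :: "'a \<Rightarrow> 'b::euclidean_space"
  assumes lM: "linear M" and lW: "linear W" and iW: "\<And>x. W x = 0 \<Longrightarrow> x = 0"
  shows "subspace T \<Longrightarrow> M ` T \<subseteq> T \<Longrightarrow> (\<forall>x\<in>T. \<forall>y\<in>T. W (M x) \<bullet> W y = W x \<bullet> W (M y))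
    \<Longrightarrow> (\<forall>x\<in>T. x \<noteq> 0 \<longrightarrow> W (M x) \<bullet> W x < 0)
    \<Longrightarrow> \<exists>B. B \<subseteq> T \<and> independent B \<and> span B = T \<and> (\<forall>b\<in>B. \<exists>r<0. M b = r *\<^sub>R b)"
proof (induction "dim T" arbitrary: T rule: less_induct)
  case less
  note sT = less.prems(1) and MT = less.prems(2) and sym = less.prems(3) and neg = less.prems(4)
  show ?case
  proof (cases "T = {0}")
    case True
    then show ?thesis by (intro exI[of _ "{}"]) (auto simp: independent_empty)
  next
    case False
    then obtain x1 where x1: "x1 \<in> T" "x1 \<noteq> 0" using sT subspace_0 by blast
    obtain x0 l where x0: "x0 \<in> T" "x0 \<noteq> 0" and eig: "M x0 = l *\<^sub>R x0"
      using selfadjoint_eigenvector_exists[OF lM lW iW sT MT sym x1] by blast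
    have "l * (W x0 \<bullet> W x0) < 0"
      using neg x0 eig lW by (auto simp: linear_scale)
    then have lneg: "l < 0" using inner_ge_zero[of "W x0"] by (auto simp: mult_less_0_iff)
    define T' where "T' = {y \<in> T. W x0 \<bullet> W y = 0}"
    note split = selfadjoint_split_eigenvector[OF lW iW sT MT sym x0 eig, folded T'_def]
    obtain B' where B': "B' \<subseteq> T'" "independent B'" "span B' = T'" "\<forall>b\<in>B'. \<exists>r<0. M b = r *\<^sub>R b"
      using less.hyps[OF split(5) split(1,2)] sym neg split(3) by blast
    show ?thesis
    proof (intro exI[of _ "insert x0 B'"] conjI)
      show "insert x0 B' \<subseteq> T" using B'(1) split(3) x0 by auto
      show "independent (insert x0 B')"
        using B' split(4) by (intro independent_insertI) auto
      show "\<forall>b\<in>insert x0 B'. \<exists>r<0. M b = r *\<^sub>R b" using B'(4) eig lneg by auto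
      show "span (insert x0 B') = T"
      proof
        show "span (insert x0 B') \<subseteq> T" using B'(1) split(3) x0 sT by (intro span_minimal) auto
        have "insert x0 T' \<subseteq> span (insert x0 B')"
          using B'(3) span_mono[of B' "insert x0 B'"] by (auto intro: span_base)
        then have "span (insert x0 T') \<subseteq> span (insert x0 B')"
          by (intro span_minimal) (auto intro: subspace_span)
        then show "T \<subseteq> span (insert x0 B')" using split(6) by blast
      qed
    qed
  qed
qed

lemma homogeneous_quadratic_coercive:
  fixes Q :: "'a::euclidean_space \<Rightarrow> real"
  assumes cont: "continuous_on UNIV Q" and scale: "\<And>c w. Q (c *\<^sub>R w) = c\<^sup>2 * Q w"
    and pos: "\<And>w. w \<noteq> 0 \<Longrightarrow> 0 < Q w"
  obtains k0 where "0 < k0" "\<And>w. k0 * (norm w)\<^sup>2 \<le> Q w"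
proof -
  obtain b :: 'a where "b \<in> Basis" using nonempty_Basis by blast
  then have "b \<in> sphere 0 1" by simp
  then have ne: "sphere (0::'a) 1 \<noteq> {}" by blast
  obtain w0 where w0: "w0 \<in> sphere 0 1" and wmin: "\<forall>y\<in>sphere 0 1. Q w0 \<le> Q y"
    using continuous_attains_inf[OF compact_sphere ne continuous_on_subset[OF cont]] by blast
  have "Q w0 * (norm w)\<^sup>2 \<le> Q w" for w
  proof (cases "w = 0")
    case True then show ?thesis using scale[of 0 w] by simp
  next
    case False
    have "(1 / norm w) *\<^sub>R w \<in> sphere 0 1" using False by simp
    then have "Q w0 \<le> (1 / norm w)\<^sup>2 * Q w" using wmin scale by metis
    then have "Q w0 * (norm w)\<^sup>2 \<le> (1 / norm w)\<^sup>2 * Q w * (norm w)\<^sup>2"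
      by (simp add: mult_right_mono)
    also have "\<dots> = Q w" using False by (simp add: power2_eq_square field_simps)
    finally show ?thesis .
  qed
  moreover have "w0 \<noteq> 0" using w0 by auto
  then have "0 < Q w0" by (rule pos)
  ultimately show ?thesis using that by blast
qed

section \<open>Differential inequalities and stability\<close>

lemma fwd_interval_props:
  assumes "fwd_interval I"
  shows "0 \<in> I" "convex I" "\<And>t. t \<in> I \<Longrightarrow> 0 \<le> t" "\<And>t. t \<in> I \<Longrightarrow> {0..t} \<subseteq> I"
  using assms unfolding fwd_interval_def by (auto simp: convex_real_interval)

lemma sublevel_forward_invariant:
  fixes V V' :: "real \<Rightarrow> real"
  assumes fI: "fwd_interval I"
    and der: "\<And>t. t \<in> I \<Longrightarrow> (V has_real_derivative V' t) (at t within I)"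
    and nonincr: "\<And>t. t \<in> I \<Longrightarrow> V t < \<rho> \<Longrightarrow> V' t \<le> 0"
    and V0: "V 0 < \<rho>" and tI: "t \<in> I"
  shows "V t < \<rho>"
proof (rule ccontr)
  assume "\<not> V t < \<rho>"
  note Ip = fwd_interval_props[OF fI]
  have derI: "(V has_derivative (*) (V' s)) (at s within {0..t'})"
    if "t' \<in> I" "s \<in> {0..t'}" for t' s
  proof -
    have "s \<in> I" using Ip(4)[OF that(1)] that(2) by blast
    from has_field_derivative_subset[OF der[OF this] Ip(4)[OF that(1)]]
    show ?thesis unfolding has_field_derivative_def .
  qed
  txt \<open>Consider the first time \<open>ts\<close> at which \<open>V\<close> reaches \<open>\<rho>\<close>.\<close>
  define C where "C = {s \<in> {0..t}. \<rho> \<le> V s}"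
  have contV: "continuous_on {0..t} V"
    using derI[OF tI] by (rule has_derivative_continuous_on)
  have "closed C" unfolding C_def
    by (rule continuous_on_closed_Collect_le) (auto intro: contV continuous_on_const)
  moreover have "bounded C" unfolding C_def by (rule bounded_subset[of "{0..t}"]) auto
  ultimately have cC: "compact C" by (simp add: compact_eq_bounded_closed)
  have "t \<in> C" unfolding C_def using Ip(3)[OF tI] \<open>\<not> V t < \<rho>\<close> by auto
  then obtain ts where tsC: "ts \<in> C" and tsmin: "\<forall>y\<in>C. ts \<le> y"
    using continuous_attains_inf[OF cC _ continuous_on_id] by blast
  have ts: "0 \<le> ts" "ts \<le> t" "\<rho> \<le> V ts" using tsC unfolding C_def by auto
  then have tspos: "0 < ts" using V0 by (cases "ts = 0") auto
  have tsI: "ts \<in> I" using Ip(4)[OF tI] ts by auto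
  obtain s where s: "0 < s" "s < ts" and eq: "V ts - V 0 = ts * V' s"
    using mvt_simple[OF tspos derI[OF tsI]] by (auto simp: mult.commute)
  have "V s < \<rho>"
  proof (rule ccontr)
    assume "\<not> V s < \<rho>"
    then have "s \<in> C" unfolding C_def using s ts by auto
    then have "ts \<le> s" using tsmin by blast
    then show False using s(2) by simp
  qed
  moreover have "s \<in> I" using Ip(4)[OF tsI] s by auto
  ultimately have "V' s \<le> 0" using nonincr by blast
  then have "ts * V' s \<le> 0" using tspos by (simp add: mult_nonneg_nonpos)
  then have "V ts \<le> V 0" using eq by simp
  then show False using ts V0 by simp
qed

text \<open>Comparison with the linear equation: \<open>V' \<le> -\<kappa> V\<close> on a forward interval gives
  \<open>V t \<le> V 0 e\<^sup>-\<^sup>\<kappa>\<^sup>t\<close>, since \<open>V(t) e\<^sup>\<kappa>\<^sup>t\<close> is nonincreasing.\<close>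
lemma differential_inequality_exp_bound:
  fixes V V' :: "real \<Rightarrow> real"
  assumes fI: "fwd_interval I"
    and der: "\<And>t. t \<in> I \<Longrightarrow> (V has_real_derivative V' t) (at t within I)"
    and dec: "\<And>t. t \<in> I \<Longrightarrow> V' t \<le> - \<kappa> * V t"
    and tI: "t \<in> I"
  shows "V t \<le> V 0 * exp (- \<kappa> * t)"
proof -
  note Ip = fwd_interval_props[OF fI]
  define u where "u s = V s * exp (\<kappa> * s)" for s
  have uder: "(u has_derivative (*) (exp (\<kappa> * s) * (V' s + \<kappa> * V s))) (at s within {0..t})"
    if "s \<in> {0..t}" for s
  proof -
    have "s \<in> I" using Ip(4)[OF tI] that by blast
    then have "(V has_real_derivative V' s) (at s within {0..t})"
      by (rule has_field_derivative_subset[OF der Ip(4)[OF tI]])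
    then have "(u has_real_derivative (exp (\<kappa> * s) * (V' s + \<kappa> * V s))) (at s within {0..t})"
      unfolding u_def by (auto intro!: derivative_eq_intros simp: algebra_simps)
    then show ?thesis unfolding has_field_derivative_def .
  qed
  have "u t \<le> u 0"
  proof (cases "t = 0")
    case False
    then have tpos: "0 < t" using Ip(3)[OF tI] by simp
    obtain s where s: "0 < s" "s < t" and eq: "u t - u 0 = t * (exp (\<kappa> * s) * (V' s + \<kappa> * V s))"
      using mvt_simple[OF tpos, of u, OF uder] by auto
    have "s \<in> I" using Ip(4)[OF tI] s by auto
    then have "V' s + \<kappa> * V s \<le> 0" using dec by force
    then have "exp (\<kappa> * s) * (V' s + \<kappa> * V s) \<le> 0" by (simp add: mult_nonneg_nonpos)
    then have "t * (exp (\<kappa> * s) * (V' s + \<kappa> * V s)) \<le> 0"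
      using tpos by (simp add: mult_nonneg_nonpos)
    then show ?thesis using eq by simp
  qed simp
  then have "V t * exp (\<kappa> * t) * exp (- \<kappa> * t) \<le> V 0 * exp (- \<kappa> * t)"
    unfolding u_def by (intro mult_right_mono) simp_all
  then show ?thesis by (simp add: mult.assoc exp_minus_inverse)
qed

lemma lyapunov_exp_decay:
  fixes V V' :: "real \<Rightarrow> real"
  assumes fI: "fwd_interval I"
    and der: "\<And>t. t \<in> I \<Longrightarrow> (V has_real_derivative V' t) (at t within I)"
    and dec: "\<And>t. t \<in> I \<Longrightarrow> V t < \<rho> \<Longrightarrow> V' t \<le> - \<kappa> * V t"
    and V0: "V 0 < \<rho>" and Vnn: "\<And>t. t \<in> I \<Longrightarrow> 0 \<le> V t" and kpos: "0 < \<kappa>"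
    and tI: "t \<in> I"
  shows "V t \<le> V 0 * exp (- \<kappa> * t)"
proof -
  have below: "V s < \<rho>" if "s \<in> I" for s
  proof (rule sublevel_forward_invariant[where V = V and V' = V'])
    show "(V has_real_derivative V' s) (at s within I)" if "s \<in> I" for s
      using der that .
  next
    fix s assume s: "s \<in> I" "V s < \<rho>"
    have "0 \<le> \<kappa> * V s" using Vnn[OF s(1)] kpos by simp
    then show "V' s \<le> 0" using dec[OF s] by linarith
  qed (use fI V0 that in auto)
  have "V' s \<le> - \<kappa> * V s" if "s \<in> I" for s
    using dec[OF that below[OF that]] .
  then show ?thesis using differential_inequality_exp_bound[of I V V' \<kappa> t] fI der tI by blast
qed

definition exp_bound_on :: "('a::real_normed_vector \<Rightarrow> 'a) \<Rightarrow> 'a set \<Rightarrow> 'a set \<Rightarrow> 'a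
    \<Rightarrow> real \<Rightarrow> real \<Rightarrow> real \<Rightarrow> bool" where
  "exp_bound_on F D S s \<delta> C \<kappa> = (\<forall>I x t. fwd_interval I \<longrightarrow> is_sol_on F D I x \<longrightarrow> x 0 \<in> S \<longrightarrow>
      dist (x 0) s < \<delta> \<longrightarrow> t \<in> I \<longrightarrow> dist (x t) s \<le> C * exp (- \<kappa> * t) * dist (x 0) s)"

lemma exp_bound_imp_exp_convergent:
  assumes "exp_bound_on F D S s \<delta> C \<kappa>" "0 < \<delta>" "0 < \<kappa>"
  shows "exp_convergent_on F D S s"
  using assms unfolding exp_bound_on_def exp_convergent_on_def by blast

text \<open>Since \<open>C e\<^sup>-\<^sup>\<kappa>\<^sup>t \<le> C\<close>, starting within \<open>min \<delta> (\<epsilon>/(C+1))\<close> keeps a solution within \<open>\<epsilon>\<close>.\<close>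
lemma exp_bound_imp_stable:
  assumes bnd: "exp_bound_on F D S s \<delta> C \<kappa>" and pos: "0 < \<delta>" "0 < \<kappa>" "0 \<le> C"
  shows "stable_on F D S s"
  unfolding stable_on_def
proof (intro allI impI)
  fix e :: real assume e: "e > 0"
  define d where "d = min \<delta> (e / (C + 1))"
  show "\<exists>d>0. \<forall>I x. fwd_interval I \<longrightarrow> is_sol_on F D I x \<longrightarrow> x 0 \<in> S \<longrightarrow> dist (x 0) s < d
      \<longrightarrow> (\<forall>t\<in>I. dist (x t) s < e)"
  proof (intro exI[of _ d] conjI allI impI ballI)
    show "d > 0" unfolding d_def using pos e by simp
    fix I x t
    assume fI: "fwd_interval I" and sol: "is_sol_on F D I x"
      and x0: "x 0 \<in> S" and dd: "dist (x 0) s < d" and tI: "t \<in> I"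
    have "dist (x t) s \<le> C * exp (- \<kappa> * t) * dist (x 0) s"
      using bnd fI sol x0 dd tI unfolding exp_bound_on_def d_def by auto
    also have "\<dots> \<le> C * 1 * dist (x 0) s"
      using pos fwd_interval_props(3)[OF fI tI] by (intro mult_right_mono mult_left_mono) auto
    also have "\<dots> \<le> C * (e / (C + 1))"
    proof -
      have "dist (x 0) s \<le> e / (C + 1)" using dd unfolding d_def by simp
      from mult_left_mono[OF this pos(3)] show ?thesis by simp
    qed
    also have "\<dots> < e" using e pos by (simp add: field_simps)
    finally show "dist (x t) s < e" .
  qed
qed

lemma exp_bound_imp_asymp_stable:
  assumes bnd: "exp_bound_on F D S s \<delta> C \<kappa>" and pos: "0 < \<delta>" "0 < \<kappa>" "0 \<le> C"
  shows "asymp_stable_on F D S s"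
  unfolding asymp_stable_on_def
proof (intro conjI exI[of _ \<delta>] allI impI)
  show "stable_on F D S s" by (rule exp_bound_imp_stable[OF assms])
  fix x assume sol: "is_sol_on F D {0..} x" and x0: "x 0 \<in> S" and dd: "dist (x 0) s < \<delta>"
  have fI: "fwd_interval {0..}" unfolding fwd_interval_def by simp
  have "\<forall>\<^sub>F t in at_top. norm (x t - s) \<le> C * exp (- \<kappa> * t) * dist (x 0) s"
    using eventually_ge_at_top[of "0::real"]
    by eventually_elim (use bnd fI sol x0 dd in \<open>auto simp: exp_bound_on_def dist_norm\<close>)
  moreover have "((\<lambda>t. C * exp (- \<kappa> * t) * dist (x 0) s) \<longlongrightarrow> 0) at_top"
    using pos by real_asymp
  ultimately have "((\<lambda>t. x t - s) \<longlongrightarrow> 0) at_top" by (rule Lim_null_comparison)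
  then show "(x \<longlongrightarrow> s) at_top" by (simp add: LIM_zero_iff)
qed (use pos in simp)

section \<open>The scalar function \<open>F\<close>\<close>

text \<open>The scalar function \<open>F(\<phi>) = \<Sum>\<^sub>k c\<^sup>e\<^sub>k (e\<^sup>-\<^sup>q\<^sup>_\<^sup>k\<^sup>-\<^sup>z\<^sup>_\<^sup>k\<^sup>\<phi> - 1)\<close> (the function \<open>f\<close> of the
  paper) governs the steady states.  It is strictly convex, and because the reference
  concentrations are electroneutral and not all valences vanish there are valences of both
  signs, so \<open>F\<close> becomes nonnegative as \<open>\<phi> \<rightarrow> \<plusminus>\<infinity>\<close>.\<close>
locale ion_profile =
  fixes z ce q :: "real^'n"
  assumes z_nz: "z \<noteq> 0"
    and ce_pos: "\<forall>k. 0 < ce $ k"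
    and ce_neutral: "(\<Sum>k\<in>UNIV. z $ k * ce $ k) = 0"
begin

definition F :: "real \<Rightarrow> real" where
  "F phi = (\<Sum>k\<in>UNIV. ce $ k * (exp (- q $ k - z $ k * phi) - 1))"

definition dF :: "real \<Rightarrow> real" where
  "dF phi = - (\<Sum>k\<in>UNIV. ce $ k * z $ k * exp (- q $ k - z $ k * phi))"

definition d2F :: "real \<Rightarrow> real" where
  "d2F phi = (\<Sum>k\<in>UNIV. ce $ k * (z $ k)\<^sup>2 * exp (- q $ k - z $ k * phi))"

lemma F_deriv: "(F has_real_derivative dF x) (at x)"
proof -
  have "(F has_real_derivative (\<Sum>k\<in>UNIV. ce $ k * (exp (- q $ k - z $ k * x) * (- z $ k)))) (at x)"
    unfolding F_def by (auto intro!: derivative_eq_intros sum.cong simp: mult_ac)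
  moreover have "(\<Sum>k\<in>UNIV. ce $ k * (exp (- q $ k - z $ k * x) * (- z $ k))) = dF x"
    unfolding dF_def sum_negf[symmetric] by (rule sum.cong) (simp_all add: algebra_simps)
  ultimately show ?thesis by simp
qed

lemma dF_deriv: "(dF has_real_derivative d2F x) (at x)"
proof -
  have "(dF has_real_derivative
      - (\<Sum>k\<in>UNIV. ce $ k * z $ k * (exp (- q $ k - z $ k * x) * (- z $ k)))) (at x)"
    unfolding dF_def by (auto intro!: derivative_eq_intros sum.cong simp: mult_ac)
  moreover have "- (\<Sum>k\<in>UNIV. ce $ k * z $ k * (exp (- q $ k - z $ k * x) * (- z $ k))) = d2F x"
    unfolding d2F_def sum_negf[symmetric]
    by (rule sum.cong) (simp_all add: algebra_simps power2_eq_square)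
  ultimately show ?thesis by simp
qed

lemma ce_nonneg: "0 \<le> ce $ k"
  using ce_pos less_imp_le by blast

lemma exists_nz: "\<exists>k. z $ k \<noteq> 0"
  using z_nz by (metis vec_eq_iff zero_index)

text \<open>Some valence is nonzero, so \<open>F'' > 0\<close> and \<open>F\<close> is strictly convex.\<close>
lemma d2F_pos: "d2F x > 0"
proof -
  obtain k where k: "z $ k \<noteq> 0" using exists_nz by blast
  have "0 < ce $ k * (z $ k)\<^sup>2 * exp (- q $ k - z $ k * x)" using k ce_pos by simp
  also have "\<dots> \<le> d2F x" unfolding d2F_def
    by (rule member_le_sum) (simp_all add: ce_nonneg)
  finally show ?thesis .
qed

lemma F_convex: "convex_on UNIV F"
  by (rule f''_ge0_imp_convex[OF convex_UNIV F_deriv dF_deriv]) (simp add: less_imp_le d2F_pos)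

text \<open>Electroneutrality of \<open>c\<^sup>e\<close> forces valences of both signs.\<close>
lemma valences_both_signs: "\<exists>j. z $ j < 0" "\<exists>j. z $ j > 0"
proof -
  have not_all: False if "\<forall>j. 0 \<le> s * z $ j" "s \<noteq> 0" for s :: real
  proof -
    have "\<forall>j. 0 \<le> s * (z $ j * ce $ j)" using that(1) ce_pos
      by (metis mult.assoc less_imp_le mult_nonneg_nonneg)
    moreover have "(\<Sum>j\<in>UNIV. s * (z $ j * ce $ j)) = 0" using ce_neutral by (simp add: sum_distrib_left[symmetric])
    ultimately have "\<forall>j. s * (z $ j * ce $ j) = 0"
      using sum_nonneg_eq_0_iff[of UNIV "\<lambda>j. s * (z $ j * ce $ j)"] by auto
    then have "\<forall>j. z $ j = 0" using ce_pos that(2) by (metis less_irrefl mult_eq_0_iff)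
    then show False using exists_nz by blast
  qed
  show "\<exists>j. z $ j < 0" using not_all[of 1] not_less by auto
  show "\<exists>j. z $ j > 0" using not_all[of "-1"] not_less by auto
qed

text \<open>A single term dominates the constant part once \<open>z\<^sub>j \<phi>\<close> is sufficiently negative.\<close>
lemma F_nonneg_if_term_large:
  assumes "ln ((\<Sum>k\<in>UNIV. ce $ k) / ce $ j) + q $ j \<le> x * (- z $ j)"
  shows "0 \<le> F x"
proof -
  define S where "S = (\<Sum>k\<in>UNIV. ce $ k)"
  have Spos: "S > 0" unfolding S_def using ce_pos by (simp add: sum_pos)
  have cj: "ce $ j > 0" using ce_pos by simp
  have "ln (S / ce $ j) \<le> - q $ j - z $ j * x" using assms unfolding S_def by (simp add: algebra_simps)
  then have "S / ce $ j \<le> exp (- q $ j - z $ j * x)"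
    using Spos cj by (metis divide_pos_pos exp_le_cancel_iff exp_ln)
  then have "S \<le> ce $ j * exp (- q $ j - z $ j * x)" using cj by (simp add: divide_le_eq mult.commute)
  also have "\<dots> \<le> (\<Sum>k\<in>UNIV. ce $ k * exp (- q $ k - z $ k * x))"
    by (rule member_le_sum) (simp_all add: ce_nonneg)
  finally show ?thesis unfolding F_def S_def by (simp add: right_diff_distrib sum_subtractf)
qed

lemma F_nonneg_far: obtains a b where "a \<le> x" "x \<le> b" "0 \<le> F a" "0 \<le> F b"
proof -
  obtain j where j: "z $ j < 0" and k: "\<exists>k. z $ k > 0" using valences_both_signs by blast
  obtain k where k: "z $ k > 0" using k by blast
  define S where "S = (\<Sum>k\<in>UNIV. ce $ k)"
  define b where "b = max x ((ln (S / ce $ j) + q $ j) / (- z $ j))"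
  define a where "a = min x ((ln (S / ce $ k) + q $ k) / (- z $ k))"
  have "0 \<le> F b"
  proof (rule F_nonneg_if_term_large)
    have "(ln (S / ce $ j) + q $ j) / (- z $ j) * (- z $ j) \<le> b * (- z $ j)"
      unfolding b_def using j by (intro mult_right_mono) auto
    then show "ln ((\<Sum>k\<in>UNIV. ce $ k) / ce $ j) + q $ j \<le> b * (- z $ j)"
      using j unfolding S_def by simp
  qed
  moreover have "0 \<le> F a"
  proof (rule F_nonneg_if_term_large)
    have "(ln (S / ce $ k) + q $ k) / (- z $ k) * (- z $ k) \<le> a * (- z $ k)"
      unfolding a_def using k by (intro mult_right_mono_neg) auto
    then show "ln ((\<Sum>k\<in>UNIV. ce $ k) / ce $ k) + q $ k \<le> a * (- z $ k)"
      using k unfolding S_def by simp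
  qed
  moreover have "a \<le> x" "x \<le> b" unfolding a_def b_def by simp_all
  ultimately show ?thesis using that by blast
qed

text \<open>Existence of a steady-state potential: if \<open>F\<close> is somewhere negative, the equation
  \<open>F' + z\<^sub>0 F = 0\<close> has a root where \<open>F < 0\<close>, namely an interior minimiser of
  \<open>e\<^sup>z\<^sup>_\<^sup>0\<^sup>\<phi> F(\<phi>)\<close> between two points where \<open>F \<ge> 0\<close>.\<close>
lemma balance_root_exists:
  assumes pm: "F pm < 0"
  obtains ph where "F ph < 0" "dF ph + zi * F ph = 0"
proof -
  obtain a b where ab: "a \<le> pm" "pm \<le> b" and Fab: "0 \<le> F a" "0 \<le> F b"
    using F_nonneg_far by blast
  define H where "H x = exp (zi * x) * F x" for x
  have Hd: "(H has_real_derivative (exp (zi * x) * (dF x + zi * F x))) (at x)" for x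
  proof -
    have "(H has_real_derivative (exp (zi * x) * zi * F x + exp (zi * x) * dF x)) (at x)"
      unfolding H_def by (auto intro!: derivative_eq_intros F_deriv simp: algebra_simps)
    then show ?thesis by (simp add: algebra_simps)
  qed
  have "continuous_on {a..b} H"
    using Hd by (meson DERIV_continuous continuous_at_imp_continuous_on)
  moreover have "{a..b} \<noteq> {}" using ab by simp
  ultimately obtain ph where ph: "ph \<in> {a..b}" and phmin: "\<forall>y\<in>{a..b}. H ph \<le> H y"
    using continuous_attains_inf[OF compact_Icc] by blast
  have "H ph \<le> H pm" using phmin ab by auto
  also have "H pm < 0" unfolding H_def using pm by (simp add: mult_pos_neg)
  finally have Hph: "H ph < 0" .
  have "a < ph" "ph < b" using Hph ph Fab unfolding H_def
    by (auto simp: mult_less_0_iff order.order_iff_strict)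
  then have "exp (zi * ph) * (dF ph + zi * F ph) = 0"
    using phmin by (intro DERIV_local_min[OF Hd, of "min (ph - a) (b - ph)"]) (auto simp: abs_less_iff)
  then have "dF ph + zi * F ph = 0" by simp
  moreover have "F ph < 0" using Hph unfolding H_def by (simp add: mult_less_0_iff)
  ultimately show ?thesis using that by blast
qed

text \<open>By convexity, \<open>F\<close> is negative between two points where it is negative.\<close>
lemma F_neg_between:
  assumes "F p1 < 0" "F p2 < 0" "p1 \<le> x" "x \<le> p2"
  shows "F x < 0"
proof (cases "p1 = p2")
  case True then show ?thesis using assms by simp
next
  case False
  then have p12: "p1 < p2" using assms by simp
  define t where "t = (x - p1) / (p2 - p1)"
  have t01: "0 \<le> t" "t \<le> 1" unfolding t_def using assms p12 by auto
  have "t * (p2 - p1) = x - p1" unfolding t_def using p12 by simp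
  then have "x = (1 - t) * p1 + t * p2" by (simp add: algebra_simps)
  then have "F x \<le> (1 - t) * F p1 + t * F p2"
    using convex_onD[OF F_convex, of t p1 p2] t01 by simp
  also have "\<dots> < 0"
    using assms(1,2) t01 by (smt (verit) mult_nonneg_nonpos mult_pos_neg)
  finally show ?thesis .
qed

text \<open>Uniqueness of the steady-state potential: on an interval where \<open>F < 0\<close> the ratio
  \<open>F'/F\<close> is strictly decreasing (its derivative is \<open>(F''F - F'\<^sup>2)/F\<^sup>2 < 0\<close>), so
  \<open>F'/F = -z\<^sub>0\<close> has at most one solution there.\<close>
lemma balance_root_unique:
  assumes F1: "F p1 < 0" and F2: "F p2 < 0"
    and r1: "dF p1 + zi * F p1 = 0" and r2: "dF p2 + zi * F p2 = 0"
  shows "p1 = p2"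
proof (rule ccontr)
  assume "p1 \<noteq> p2"
  then consider "p1 < p2" | "p2 < p1" by linarith
  then obtain a b where ab: "a < b" "F a < 0" "F b < 0" "dF a / F a = - zi" "dF b / F b = - zi"
    using assms by (cases; simp add: field_simps; blast)
  define R where "R x = dF x / F x" for x
  have Rd: "(R has_real_derivative ((d2F x * F x - dF x * dF x) / (F x * F x))) (at x)"
    if "a \<le> x" "x \<le> b" for x
    unfolding R_def
    by (rule DERIV_divide[OF dF_deriv F_deriv]) (use F_neg_between[OF ab(2,3) that] in simp)
  obtain xi where xi: "a < xi" "xi < b"
    and eq: "R b - R a = (b - a) * ((d2F xi * F xi - dF xi * dF xi) / (F xi * F xi))"
    using MVT2[OF ab(1) Rd] by blast
  have Fxi: "F xi < 0" using F_neg_between[OF ab(2,3)] xi by simp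
  have "d2F xi * F xi - dF xi * dF xi < 0"
    using mult_pos_neg[OF d2F_pos Fxi] by (smt (verit) zero_le_square)
  then have "(d2F xi * F xi - dF xi * dF xi) / (F xi * F xi) < 0"
    using Fxi by (simp add: divide_neg_pos mult_neg_neg)
  then have "R b < R a" using eq ab(1) by (smt (verit) mult_pos_neg)
  then show False using ab(4,5) unfolding R_def by simp
qed

end

section \<open>The steady state\<close>

lemma matrix_vector_mult_uminus: "(M::real^'n^'m) *v (- x) = - (M *v x)"
  using linear_neg[OF matrix_vector_mul_linear] by blast

lemma has_derivative_vec_componentwise:
  fixes f f' :: "'a::real_normed_vector \<Rightarrow> real^'n"
  assumes "\<And>i. ((\<lambda>x. f x $ i) has_derivative (\<lambda>h. f' h $ i)) (at a within S)"
  shows "(f has_derivative f') (at a within S)"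
proof -
  have "((\<lambda>x. f x \<bullet> b) has_derivative (\<lambda>x. f' x \<bullet> b)) (at a within S)" if bB: "b \<in> Basis" for b
  proof -
    obtain i where b: "b = axis i 1" using bB unfolding Basis_vec_def by auto
    show ?thesis unfolding b inner_axis using assms[of i] by simp
  qed
  then show ?thesis using has_derivative_componentwise_within by blast
qed

text \<open>All hypotheses of the theorem except \<open>N \<ge> 2\<close>, which the
  argument does not use; instead of \<open>f(\<phi>\<^sub>m\<^sub>i\<^sub>n) < 0\<close> only the existence of some \<open>\<phi>\<close> with
  \<open>f(\<phi>) < 0\<close> is needed.\<close>
locale pump_leak =
  fixes z ce p :: "real^'n" and L :: "real^'n^'n" and A zi zeta :: real
  assumes z_nz: "z \<noteq> 0"
    and ce_pos: "\<forall>k. 0 < ce $ k"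
    and ce_neutral: "(\<Sum>k\<in>UNIV. z $ k * ce $ k) = 0"
    and A_pos: "0 < A"
    and L_sym: "transpose L = L"
    and L_pd: "\<forall>x. x \<noteq> 0 \<longrightarrow> 0 < x \<bullet> (L *v x)"
    and zeta_pos: "0 < zeta"
    and f_neg: "\<exists>phi. fPL z ce L p phi < 0"
begin

definition q :: "real^'n" where "q = matrix_inv L *v p"

sublocale ion_profile z ce q
  by unfold_locales (use z_nz ce_pos ce_neutral in auto)

lemma fPL_eq_F: "fPL z ce L p = F"
  unfolding fPL_def F_def by (rule ext) (simp add: q_def)

lemma L_symm: "x \<bullet> (L *v y) = (L *v x) \<bullet> y"
proof -
  have "x \<bullet> (L *v y) = (transpose L *v x) \<bullet> y" by (simp add: dot_lmul_matrix)
  then show ?thesis using L_sym by simp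
qed

lemma L_nonneg: "0 \<le> x \<bullet> (L *v x)"
  using L_pd by (cases "x = 0") (auto intro: less_imp_le)

lemma L_zero_form: "x \<bullet> (L *v x) = 0 \<Longrightarrow> x = 0"
  using L_pd by (metis less_irrefl)

lemma L_inverse: "L ** matrix_inv L = mat 1" "matrix_inv L ** L = mat 1"
proof -
  have "\<exists>B. B ** L = mat 1"
    using L_pd matrix_left_invertible_ker by (metis inner_zero_right less_irrefl)
  then have "invertible L" using invertible_left_inverse by blast
  then have "\<exists>A'. L ** A' = mat 1 \<and> A' ** L = mat 1" unfolding invertible_def .
  then have "L ** matrix_inv L = mat 1 \<and> matrix_inv L ** L = mat 1"
    unfolding matrix_inv_def by (rule someI_ex)
  then show "L ** matrix_inv L = mat 1" "matrix_inv L ** L = mat 1" by auto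
qed

lemma L_q: "L *v q = p"
  unfolding q_def by (simp add: matrix_vector_mul_assoc L_inverse)

lemma L_solve: "L *v x = - p \<Longrightarrow> x = - q"
  by (metis L_inverse(2) matrix_vector_mul_assoc matrix_vector_mul_lid matrix_vector_mult_uminus q_def)

definition dz :: real where "dz = z \<bullet> (L *v z)"

lemma dz_pos: "dz > 0" unfolding dz_def using L_pd z_nz by blast

lemma z_L_mu_p: "z \<bullet> (L *v muv z ce (phiE z ce L p c) c) + z \<bullet> p = 0"
proof -
  have "z \<bullet> (L *v muv z ce (phiE z ce L p c) c) + z \<bullet> p
      = z \<bullet> (L *v gam ce c + p) + phiE z ce L p c * dz"
    unfolding muv_def dz_def by (simp add: matrix_vector_right_distrib matrix_vector_mult_scaleR inner_add_right)
  then show ?thesis unfolding phiE_def using dz_pos unfolding dz_def by simp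
qed

text \<open>Boltzmann concentrations at potential \<open>\<phi>\<close>: the concentrations with \<open>\<mu> = -q\<close>.
  Every steady state has this form, and the steady-state conditions reduce to scalar
  equations for \<open>\<phi>\<close> via \<open>F\<close> and \<open>F'\<close>.\<close>
definition boltz :: "real \<Rightarrow> real^'n" where
  "boltz ph = (\<chi> k. ce $ k * exp (- q $ k - z $ k * ph))"

lemma boltz_pos: "boltz ph $ k > 0" unfolding boltz_def using ce_pos by simp

lemma vsum_boltz: "vsum (boltz ph) - vsum ce = F ph"
  unfolding vsum_def boltz_def F_def by (simp add: sum_subtractf[symmetric] algebra_simps)

lemma z_boltz: "z \<bullet> boltz ph = - dF ph"
  unfolding boltz_def dF_def inner_vec_def sum_negf[symmetric] by (simp add: algebra_simps)

lemma gam_boltz: "gam ce (boltz ph) = - q - ph *\<^sub>R z"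
  unfolding gam_def boltz_def using ce_pos by (simp add: vec_eq_iff) (metis less_irrefl)

lemma phiE_boltz: "phiE z ce L p (boltz ph) = ph"
proof -
  have "L *v gam ce (boltz ph) + p = - (ph *\<^sub>R (L *v z))"
    unfolding gam_boltz
    by (simp add: matrix_vector_mult_diff_distrib matrix_vector_mult_uminus matrix_vector_mult_scaleR L_q)
  then show ?thesis unfolding phiE_def using dz_pos unfolding dz_def by simp
qed

lemma muv_boltz: "muv z ce (phiE z ce L p (boltz ph)) (boltz ph) = - q"
  unfolding muv_def phiE_boltz gam_boltz by simp

lemma boltz_of_mu:
  assumes c_pos: "\<forall>k. 0 < c $ k" and mu: "muv z ce ph c = - q"
  shows "c = boltz ph"
proof -
  have "\<forall>k. ln (c $ k / ce $ k) = - q $ k - z $ k * ph"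
    using mu unfolding muv_def gam_def by (simp add: vec_eq_iff algebra_simps)
  then have "\<forall>k. c $ k = ce $ k * exp (- q $ k - z $ k * ph)"
    using c_pos ce_pos by (metis divide_pos_pos exp_ln nonzero_mult_div_cancel_left
        less_irrefl times_divide_eq_right)
  then show ?thesis unfolding boltz_def by (simp add: vec_eq_iff)
qed

definition phis :: real where "phis = (SOME ph. F ph < 0 \<and> dF ph + zi * F ph = 0)"

lemma phis: "F phis < 0" "dF phis + zi * F phis = 0"
proof -
  have "\<exists>ph. F ph < 0 \<and> dF ph + zi * F ph = 0"
    using f_neg balance_root_exists unfolding fPL_eq_F by blast
  then have "F phis < 0 \<and> dF phis + zi * F phis = 0" unfolding phis_def by (rule someI_ex)
  then show "F phis < 0" "dF phis + zi * F phis = 0" by auto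
qed

definition cs :: "real^'n" where "cs = boltz phis"
definition vs :: real where "vs = - A / F phis"
definition sst :: "(real^'n) \<times> real" where "sst = (cs, vs)"

lemma cs_pos: "cs $ k > 0" unfolding cs_def by (rule boltz_pos)
lemma vs_pos: "vs > 0" unfolding vs_def using phis A_pos by (simp add: divide_pos_neg)
lemma A_vs: "A / vs = - F phis" unfolding vs_def using phis A_pos by simp

lemma z_cs: "z \<bullet> cs = - zi * A / vs"
proof -
  have "zi * A / vs = zi * (A / vs)" by simp
  then show ?thesis using z_boltz[of phis] phis(2) A_vs unfolding cs_def by (simp add: algebra_simps)
qed

lemma L_mu_cs: "L *v muv z ce (phiE z ce L p cs) cs + p = 0"
  unfolding cs_def muv_boltz by (simp add: matrix_vector_mult_uminus L_q)

lemma piw_cs: "piw ce A cs vs = 0"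
  using vsum_boltz[of phis] A_vs unfolding piw_def cs_def by simp

lemma steady: "PLsteady z ce A zi L p sst"
  unfolding PLsteady_def PLS_def PLdom_def sst_def
  using cs_pos vs_pos z_cs L_mu_cs piw_cs by simp

text \<open>Uniqueness: a steady state has \<open>\<mu> = -q\<close>, hence Boltzmann form at its own
  potential, which then solves the scalar equation and so equals \<open>\<phi>\<^sub>s\<close>.\<close>
lemma steady_unique:
  assumes st: "PLsteady z ce A zi L p s'"
  shows "s' = sst"
proof -
  obtain c' v' where s': "s' = (c', v')" by (cases s')
  have cpos: "\<forall>k. 0 < c' $ k" and vpos: "0 < v'" and con: "z \<bullet> c' + zi * A / v' = 0"
    and Lm: "L *v muv z ce (phiE z ce L p c') c' + p = 0" and pw: "piw ce A c' v' = 0"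
    using st unfolding PLsteady_def PLS_def PLdom_def s' by auto
  define ph where "ph = phiE z ce L p c'"
  have "L *v muv z ce ph c' = - p" using Lm unfolding ph_def by (simp add: eq_neg_iff_add_eq_0)
  then have c'eq: "c' = boltz ph" using boltz_of_mu[OF cpos] L_solve by blast
  have Av: "A / v' = - F ph" using pw vsum_boltz[of ph] unfolding piw_def c'eq by simp
  then have Fn: "F ph < 0" using A_pos vpos by (metis divide_pos_pos neg_0_less_iff_less)
  have "zi * A / v' = zi * (A / v')" by simp
  then have "dF ph + zi * F ph = 0" using con z_boltz[of ph] Av unfolding c'eq
    by (simp add: algebra_simps)
  then have "ph = phis" using balance_root_unique[OF Fn phis(1)] phis(2) by blast
  then have "c' = cs" "v' = vs" using c'eq Av A_vs vpos vs_pos A_pos unfolding cs_def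
    by (auto simp: field_simps)
  then show ?thesis unfolding s' sst_def by simp
qed

end

section \<open>The linearisation\<close>

text \<open>With \<open>a = \<delta>c\<close>, \<open>b = \<delta>v\<close>:
  \<open>\<delta>\<gamma> = a / c\<^sub>s\<close>, \<open>\<delta>\<phi>\<close> and \<open>\<delta>\<mu> = \<delta>\<gamma> + \<delta>\<phi> z\<close> the linearised potentials,
  \<open>\<delta>\<pi> = -\<Sum>a + A b / v\<^sub>s\<^sup>2\<close> the linearised osmotic pressure, and, since \<open>L\<mu> + p\<close> and \<open>\<pi>\<^sub>w\<close>
  vanish at the steady state, only their variations survive.\<close>
context pump_leak
begin

definition dgam :: "real^'n \<Rightarrow> real^'n" where "dgam a = (\<chi> k. a $ k / cs $ k)"
definition dphi :: "real^'n \<Rightarrow> real" where "dphi a = - (z \<bullet> (L *v dgam a)) / dz"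
definition dmu :: "real^'n \<Rightarrow> real^'n" where "dmu a = dgam a + dphi a *\<^sub>R z"
definition dpi :: "(real^'n) \<times> real \<Rightarrow> real" where "dpi w = - vsum (fst w) + A / vs\<^sup>2 * snd w"

definition Lin :: "(real^'n) \<times> real \<Rightarrow> (real^'n) \<times> real" where
  "Lin w = ((1 / vs) *\<^sub>R (- (L *v dmu (fst w)) + (zeta * dpi w) *\<^sub>R cs), - zeta * dpi w)"

text \<open>The flux \<open>d(vc)/dt = -L\<mu> - p\<close> rewritten with \<open>dv/dt\<close>; the field is \<open>(flux / v, -\<zeta>\<pi>\<^sub>w)\<close>.\<close>
definition flux :: "(real^'n) \<times> real \<Rightarrow> real^'n" where
  "flux x = - (L *v muv z ce (phiE z ce L p (fst x)) (fst x)) - p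
     + (zeta * piw ce A (fst x) (snd x)) *\<^sub>R fst x"

lemma PLfield_eq:
  "PLfield z ce A L p zeta = (\<lambda>x. ((1 / snd x) *\<^sub>R flux x, - zeta * piw ce A (fst x) (snd x)))"
  unfolding PLfield_def flux_def by (rule ext) (simp add: case_prod_unfold Let_def)

lemma flux_sst: "flux sst = 0"
proof -
  have "- (L *v muv z ce (phiE z ce L p cs) cs) - p = - (L *v muv z ce (phiE z ce L p cs) cs + p)"
    by simp
  then show ?thesis unfolding flux_def sst_def using L_mu_cs piw_cs by simp
qed

lemma field_sst: "PLfield z ce A L p zeta sst = 0"
  unfolding PLfield_eq using flux_sst piw_cs by (simp add: sst_def zero_prod_def)

lemma fst_nth_deriv: "((\<lambda>x::(real^'n) \<times> real. fst x $ i) has_derivative (\<lambda>x. fst x $ i)) F'"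
  by (rule bounded_linear_imp_has_derivative)
     (rule bounded_linear_compose[OF bounded_linear_vec_nth bounded_linear_fst])

lemma gam_deriv: "((\<lambda>x. gam ce (fst x)) has_derivative (\<lambda>h. dgam (fst h))) (at sst)"
proof (rule has_derivative_vec_componentwise)
  fix i
  have ci: "ce $ i \<noteq> 0" using ce_pos by (metis less_irrefl)
  have "((\<lambda>x. ln (fst x $ i / ce $ i)) has_derivative (\<lambda>h. fst h $ i / cs $ i)) (at sst)"
    using cs_pos[of i] ce_pos unfolding sst_def
    by (auto intro!: derivative_eq_intros fst_nth_deriv simp: ci fun_eq_iff)
  then show "((\<lambda>x. gam ce (fst x) $ i) has_derivative (\<lambda>h. dgam (fst h) $ i)) (at sst)"
    unfolding gam_def dgam_def by simp
qed

lemma phi_deriv: "((\<lambda>x. phiE z ce L p (fst x)) has_derivative (\<lambda>h. dphi (fst h))) (at sst)"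
proof -
  have "((\<lambda>x. z \<bullet> (L *v gam ce (fst x))) has_derivative (\<lambda>h. z \<bullet> (L *v dgam (fst h)))) (at sst)"
    using gam_deriv by (intro bounded_linear.has_derivative[OF bounded_linear_inner_right]
        bounded_linear.has_derivative[OF matrix_vector_mul_bounded_linear])
  then have "((\<lambda>x. (- 1 / dz) * (z \<bullet> (L *v gam ce (fst x))) + (- (z \<bullet> p) / dz)) has_derivative
      (\<lambda>h. (- 1 / dz) * (z \<bullet> (L *v dgam (fst h))))) (at sst)"
    by (intro has_derivative_add_const has_derivative_mult_right)
  moreover have "phiE z ce L p c = (- 1 / dz) * (z \<bullet> (L *v gam ce c)) + (- (z \<bullet> p) / dz)" for c
    unfolding phiE_def dz_def inner_add_right using dz_pos unfolding dz_def by (simp add: field_simps)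
  ultimately show ?thesis unfolding dphi_def by simp
qed

lemma mu_deriv: "((\<lambda>x. muv z ce (phiE z ce L p (fst x)) (fst x)) has_derivative (\<lambda>h. dmu (fst h))) (at sst)"
  unfolding muv_def dmu_def by (intro has_derivative_add gam_deriv has_derivative_scaleR_left phi_deriv)

lemma inv_deriv: "((\<lambda>x::(real^'n) \<times> real. B / snd x) has_derivative (\<lambda>h. - (B / vs\<^sup>2) * snd h)) (at sst)"
proof -
  have "((\<lambda>v::real. B / v) has_real_derivative - (B / vs\<^sup>2)) (at vs)"
    using vs_pos by (auto intro!: derivative_eq_intros simp: power2_eq_square)
  then have "((\<lambda>v::real. B / v) has_derivative (*) (- (B / vs\<^sup>2))) (at (snd sst))"
    unfolding has_field_derivative_def sst_def by simp
  from has_derivative_compose[OF bounded_linear_imp_has_derivative[OF bounded_linear_snd] this]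
  show ?thesis by simp
qed

lemma pi_deriv: "((\<lambda>x. piw ce A (fst x) (snd x)) has_derivative dpi) (at sst)"
proof -
  have "((\<lambda>x. vsum ce - (vsum (fst x) + A / snd x)) has_derivative
      (\<lambda>h. 0 - (vsum (fst h) + - (A / vs\<^sup>2) * snd h))) (at sst)"
    unfolding vsum_def
    by (intro has_derivative_diff has_derivative_const has_derivative_add has_derivative_sum
        fst_nth_deriv inv_deriv)
  moreover have "(\<lambda>h. 0 - (vsum (fst h) + - (A / vs\<^sup>2) * snd h)) = dpi"
    unfolding dpi_def by (rule ext) simp
  ultimately show ?thesis unfolding piw_def vsum_def by simp
qed

lemma flux_deriv: "(flux has_derivative (\<lambda>h. - (L *v dmu (fst h)) + (zeta * dpi h) *\<^sub>R cs)) (at sst)"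
proof -
  have "(flux has_derivative (\<lambda>h. - (L *v dmu (fst h)) - 0 +
      ((zeta * piw ce A (fst sst) (snd sst)) *\<^sub>R fst h + (zeta * dpi h) *\<^sub>R fst sst))) (at sst)"
    unfolding flux_def
    by (intro has_derivative_add has_derivative_diff has_derivative_minus has_derivative_const
        has_derivative_scaleR has_derivative_mult_right pi_deriv
        bounded_linear.has_derivative[OF matrix_vector_mul_bounded_linear mu_deriv]
        bounded_linear_imp_has_derivative[OF bounded_linear_fst])
  then show ?thesis using piw_cs by (simp add: sst_def)
qed

lemma field_deriv: "(PLfield z ce A L p zeta has_derivative Lin) (at sst)"
proof -
  have "((\<lambda>x. ((1 / snd x) *\<^sub>R flux x, - zeta * piw ce A (fst x) (snd x))) has_derivative
      (\<lambda>h. ((1 / snd sst) *\<^sub>R (- (L *v dmu (fst h)) + (zeta * dpi h) *\<^sub>R cs)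
        + (- (1 / vs\<^sup>2) * snd h) *\<^sub>R flux sst, - zeta * dpi h))) (at sst)"
    by (intro has_derivative_Pair has_derivative_scaleR inv_deriv flux_deriv
        has_derivative_mult_right pi_deriv)
  then show ?thesis unfolding PLfield_eq flux_sst Lin_def by (simp add: sst_def)
qed

lemma Lin_linear: "linear Lin"
  using field_deriv has_derivative_bounded_linear bounded_linear.linear by blast

end

section \<open>Spectral properties of the linearisation\<close>

text \<open>The weighted inner product \<open>\<langle>u, w\<rangle>\<^sub>W = v\<^sub>s \<Sum>\<^sub>k u\<^sub>k w\<^sub>k / c\<^sub>s\<^sub>k + A u\<^sub>v w\<^sub>v / v\<^sub>s\<^sup>2\<close>, realised
  as \<open>W u \<bullet> W w\<close> for a diagonal injective linear map \<open>W\<close>.  For it the linearisation is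
  symmetric, \<open>\<langle>Lin u, w\<rangle>\<^sub>W = -\<langle>\<delta>\<mu>\<^sub>u, L \<delta>\<mu>\<^sub>w\<rangle> - \<zeta> \<delta>\<pi>\<^sub>u \<delta>\<pi>\<^sub>w\<close>, hence negative semidefinite,
  and definite on the tangent space of \<open>S\<close>, the kernel of \<open>dcon\<close>.\<close>
context pump_leak
begin

definition W :: "(real^'n) \<times> real \<Rightarrow> (real^'n) \<times> real" where
  "W w = ((\<chi> k. sqrt (vs / cs $ k) * fst w $ k), sqrt A / vs * snd w)"

text \<open>Derivative of the constraint \<open>z \<bullet> c + z\<^sub>0 A / v\<close> at the steady state.\<close>
definition dcon :: "(real^'n) \<times> real \<Rightarrow> real" where
  "dcon w = z \<bullet> fst w - zi * A / vs\<^sup>2 * snd w"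

lemma W_inner: "W x \<bullet> W y = vs * (fst x \<bullet> dgam (fst y)) + A / vs\<^sup>2 * snd x * snd y"
proof -
  have "(\<chi> k. sqrt (vs / cs $ k) * fst x $ k) \<bullet> (\<chi> k. sqrt (vs / cs $ k) * fst y $ k)
      = vs * (fst x \<bullet> dgam (fst y))"
    unfolding inner_vec_def dgam_def sum_distrib_left
  proof (rule sum.cong)
    fix k
    have "sqrt (vs / cs $ k) * sqrt (vs / cs $ k) = vs / cs $ k"
      using vs_pos cs_pos[of k] by simp
    then show "(\<chi> k. sqrt (vs / cs $ k) * fst x $ k) $ k \<bullet> (\<chi> k. sqrt (vs / cs $ k) * fst y $ k) $ k =
        vs * (fst x $ k \<bullet> (\<chi> k. fst y $ k / cs $ k) $ k)"
      by (simp add: algebra_simps)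
  qed simp
  moreover have "(sqrt A / vs * snd x) * (sqrt A / vs * snd y) = A / vs\<^sup>2 * snd x * snd y"
    using A_pos by (simp add: power2_eq_square field_simps)
  ultimately show ?thesis unfolding W_def inner_Pair by simp
qed

lemma W_linear: "linear W"
  by (rule linearI) (simp_all add: W_def vec_eq_iff algebra_simps add_divide_distrib)

lemma W_inj: "W x = 0 \<Longrightarrow> x = 0"
proof -
  assume h: "W x = 0"
  have "sqrt (vs / cs $ k) * fst x $ k = 0" for k
    using arg_cong[OF h, of "\<lambda>w. fst w $ k"] unfolding W_def by simp
  moreover have "sqrt (vs / cs $ k) > 0" for k using vs_pos cs_pos[of k] by simp
  ultimately have "fst x $ k = 0" for k by (metis less_irrefl mult_eq_0_iff)
  then have "fst x = 0" by (simp add: vec_eq_iff)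
  moreover have "sqrt A / vs * snd x = 0" using arg_cong[OF h, of snd] unfolding W_def by simp
  then have "snd x = 0" using A_pos vs_pos by simp
  ultimately show "x = 0" by (simp add: prod_eq_iff)
qed

lemma dcon_linear: "linear dcon"
  by (rule linearI) (simp_all add: dcon_def inner_add_right algebra_simps add_divide_distrib)

lemma tangent_eq: "PLtangent z A zi sst = {w. dcon w = 0}"
  unfolding PLtangent_def dcon_def sst_def by auto

lemma z_L_dmu: "z \<bullet> (L *v dmu a) = 0"
proof -
  have "z \<bullet> (L *v dmu a) = z \<bullet> (L *v dgam a) + dphi a * dz"
    unfolding dmu_def dz_def by (simp add: matrix_vector_right_distrib matrix_vector_mult_scaleR inner_add_right)
  then show ?thesis unfolding dphi_def using dz_pos by simp
qed

lemma Lin_inner: "W (Lin u) \<bullet> W w = - (dmu (fst u) \<bullet> (L *v dmu (fst w))) - zeta * dpi u * dpi w"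
proof -
  let ?a = "fst u" and ?b = "fst w"
  have cs_dgam: "cs \<bullet> dgam ?b = vsum ?b"
    unfolding dgam_def inner_vec_def vsum_def using cs_pos by (intro sum.cong) (auto simp: less_imp_neq[symmetric])
  have Lz: "dmu ?a \<bullet> (L *v z) = 0" using z_L_dmu[of ?a] by (simp add: L_symm inner_commute)
  have "dgam ?b = dmu ?b - dphi ?b *\<^sub>R z" unfolding dmu_def by simp
  then have "(L *v dmu ?a) \<bullet> dgam ?b = dmu ?a \<bullet> (L *v dmu ?b)"
    using Lz by (simp add: L_symm[symmetric] matrix_vector_mult_diff_distrib matrix_vector_mult_scaleR inner_diff_right)
  moreover have "vs * (fst (Lin u) \<bullet> dgam ?b) = (- (L *v dmu ?a) + (zeta * dpi u) *\<^sub>R cs) \<bullet> dgam ?b"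
    unfolding Lin_def using vs_pos by simp
  ultimately have "vs * (fst (Lin u) \<bullet> dgam ?b) = - (dmu ?a \<bullet> (L *v dmu ?b)) + zeta * dpi u * vsum ?b"
    using cs_dgam by (simp add: inner_diff_left)
  then show ?thesis unfolding W_inner by (simp add: Lin_def dpi_def algebra_simps)
qed

lemma Lin_symmetric: "W (Lin u) \<bullet> W w = W u \<bullet> W (Lin w)"
proof -
  have "dmu (fst u) \<bullet> (L *v dmu (fst w)) = (L *v dmu (fst u)) \<bullet> dmu (fst w)" by (rule L_symm)
  also have "\<dots> = dmu (fst w) \<bullet> (L *v dmu (fst u))" by (rule inner_commute)
  finally show ?thesis unfolding inner_commute[of "W u"] Lin_inner by simp
qed

lemma Lin_nonpos: "W (Lin w) \<bullet> W w \<le> 0"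
  unfolding Lin_inner using L_nonneg[of "dmu (fst w)"]
    mult_nonneg_nonneg[OF less_imp_le[OF zeta_pos] zero_le_square[of "dpi w"]] by (simp add: mult.assoc)

lemma Lin_zero_form: assumes "W (Lin w) \<bullet> W w = 0" shows "dmu (fst w) = 0" "dpi w = 0"
proof -
  have "dmu (fst w) \<bullet> (L *v dmu (fst w)) + zeta * (dpi w * dpi w) = 0"
    using assms unfolding Lin_inner by (simp add: algebra_simps)
  moreover have "0 \<le> dmu (fst w) \<bullet> (L *v dmu (fst w))" "0 \<le> zeta * (dpi w * dpi w)"
    using L_nonneg zeta_pos by simp_all
  ultimately have "dmu (fst w) \<bullet> (L *v dmu (fst w)) = 0" "zeta * (dpi w * dpi w) = 0" by linarith+
  then show "dmu (fst w) = 0" "dpi w = 0" using L_zero_form zeta_pos by simp_all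
qed

text \<open>No nonzero tangent vector has \<open>\<delta>\<mu> = 0\<close> and \<open>\<delta>\<pi> = 0\<close>: such a vector is
  \<open>a = -\<delta>\<phi> z c\<^sub>s\<close>, \<open>b = \<delta>\<phi> z\<^sub>0 v\<^sub>s\<close>, and the tangency condition forces
  \<open>\<delta>\<phi> (\<Sum>z\<^sub>k\<^sup>2 c\<^sub>s\<^sub>k + z\<^sub>0\<^sup>2 A / v\<^sub>s) = 0\<close>.\<close>
lemma kernel_trivial:
  assumes m: "dmu (fst w) = 0" and pi0: "dpi w = 0" and g0: "dcon w = 0"
  shows "w = 0"
proof -
  define a where "a = fst w"
  define b where "b = snd w"
  define ph where "ph = dphi a"
  define Z2 where "Z2 = (\<Sum>k\<in>UNIV. (z $ k)\<^sup>2 * cs $ k)"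
  have Z2_pos: "Z2 > 0"
  proof -
    obtain k where k: "z $ k \<noteq> 0" using exists_nz by blast
    have "0 < (z $ k)\<^sup>2 * cs $ k" using k cs_pos[of k] by simp
    also have "\<dots> \<le> Z2" unfolding Z2_def
      by (rule member_le_sum) (simp_all add: cs_pos less_imp_le)
    finally show ?thesis .
  qed
  have ak: "a $ k = - ph * z $ k * cs $ k" for k
  proof -
    have "a $ k / cs $ k + ph * z $ k = 0"
      using arg_cong[OF m, of "\<lambda>x. x $ k"] unfolding dmu_def dgam_def a_def ph_def by simp
    then show ?thesis using cs_pos[of k] by (simp add: field_simps)
  qed
  have va: "vsum a = - ph * (z \<bullet> cs)"
    unfolding vsum_def inner_vec_def ak sum_distrib_left by (rule sum.cong) simp_all
  have za: "z \<bullet> a = - ph * Z2"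
    unfolding Z2_def inner_vec_def ak sum_distrib_left by (rule sum.cong) (simp_all add: power2_eq_square)
  have "A / vs\<^sup>2 * b = ph * zi * A / vs" using pi0 va z_cs unfolding dpi_def a_def b_def
    by (simp add: algebra_simps)
  then have bb: "b = ph * zi * vs" using vs_pos A_pos by (simp add: field_simps power2_eq_square)
  have "- ph * Z2 - zi * A / vs\<^sup>2 * (ph * zi * vs) = 0" using g0 za bb unfolding dcon_def a_def b_def by simp
  then have "ph * (Z2 + zi\<^sup>2 * A / vs) = 0" using vs_pos by (simp add: field_simps power2_eq_square)
  moreover have "Z2 + zi\<^sup>2 * A / vs > 0" using Z2_pos A_pos vs_pos by (simp add: add_pos_nonneg)
  ultimately have ph0: "ph = 0" by simp
  then have "a = 0" "b = 0" using ak bb by (simp_all add: vec_eq_iff)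
  then show ?thesis unfolding a_def b_def by (simp add: prod_eq_iff)
qed

lemma Lin_negdef_tangent: "dcon w = 0 \<Longrightarrow> w \<noteq> 0 \<Longrightarrow> W (Lin w) \<bullet> W w < 0"
  using Lin_nonpos[of w] Lin_zero_form[of w] kernel_trivial[of w] by force

text \<open>The tangent space is invariant under the linearisation (the constraint is conserved).\<close>
lemma Lin_tangent: "dcon (Lin w) = 0"
proof -
  have "z \<bullet> fst (Lin w) = (1 / vs) * (- (z \<bullet> (L *v dmu (fst w))) + zeta * dpi w * (z \<bullet> cs))"
    unfolding Lin_def by (simp add: inner_add_right inner_diff_right)
  then have "z \<bullet> fst (Lin w) = (1 / vs) * (zeta * dpi w * (- zi * A / vs))"
    unfolding z_L_dmu z_cs by simp
  then show ?thesis unfolding dcon_def using vs_pos by (simp add: Lin_def field_simps power2_eq_square)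
qed

lemma Lin_diagonalizable: "diag_neg_on Lin (PLtangent z A zi sst)"
proof -
  have sT: "subspace {w. dcon w = 0}"
    using dcon_linear by (simp add: subspace_def linear_add linear_scale linear_0)
  have MT: "Lin ` {w. dcon w = 0} \<subseteq> {w. dcon w = 0}" using Lin_tangent by auto
  show ?thesis unfolding diag_neg_on_def tangent_eq
    using MT selfadjoint_negdef_diagonalizable[OF Lin_linear W_linear W_inj sT MT]
      Lin_symmetric Lin_negdef_tangent by blast
qed

end

section \<open>Invariance of \<open>S\<close> and the Lyapunov estimate\<close>

text \<open>Conservation of charge: \<open>v (z \<bullet> c)\<close> is constant along solutions, because the eliminated
  potential makes \<open>z \<bullet> (L\<mu> + p) = 0\<close>.\<close>
context pump_leak
begin

definition charge :: "(real^'n) \<times> real \<Rightarrow> real" where "charge y = snd y * (z \<bullet> fst y)"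

lemma charge_deriv: "(charge has_derivative (\<lambda>h. snd h * (z \<bullet> fst y) + snd y * (z \<bullet> fst h))) (at y)"
proof -
  have "((\<lambda>y::(real^'n)\<times>real. z \<bullet> fst y) has_derivative (\<lambda>h. z \<bullet> fst h)) (at y)"
    by (rule bounded_linear_imp_has_derivative)
       (rule bounded_linear_inner_right_comp[OF bounded_linear_fst])
  from has_derivative_mult[OF bounded_linear_imp_has_derivative[OF bounded_linear_snd] this]
  show ?thesis unfolding charge_def by (simp add: add.commute)
qed

lemma charge_field:
  assumes "y \<in> PLdom"
  shows "snd (PLfield z ce A L p zeta y) * (z \<bullet> fst y) + snd y * (z \<bullet> fst (PLfield z ce A L p zeta y)) = 0"
proof -
  have v: "snd y > 0" using assms unfolding PLdom_def by auto
  have "snd y * (z \<bullet> fst (PLfield z ce A L p zeta y)) = z \<bullet> flux y"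
    unfolding PLfield_eq using v by simp
  also have "\<dots> = zeta * piw ce A (fst y) (snd y) * (z \<bullet> fst y)"
    unfolding flux_def using z_L_mu_p[of "fst y"] by (simp add: inner_add_right inner_diff_right)
  finally show ?thesis unfolding PLfield_eq by simp
qed

lemma PLS_charge: "x \<in> PLS z A zi \<longleftrightarrow> x \<in> PLdom \<and> charge x = - zi * A"
  unfolding PLS_def PLdom_def charge_def by (cases x) (auto simp: field_simps)

lemma solution_stays_in_S:
  assumes fI: "fwd_interval I" and sol: "is_sol_on (PLfield z ce A L p zeta) PLdom I x"
    and x0: "x 0 \<in> PLS z A zi" and tI: "t \<in> I"
  shows "x t \<in> PLS z A zi"
proof -
  have "((\<lambda>t. charge (x t)) has_derivative (\<lambda>h. 0)) (at s within I)" if sI: "s \<in> I" for s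
  proof -
    let ?f = "PLfield z ce A L p zeta (x s)"
    have "(x has_derivative (\<lambda>h. h *\<^sub>R ?f)) (at s within I)"
      using sol sI unfolding is_sol_on_def has_vector_derivative_def by auto
    from has_derivative_compose[OF this charge_deriv]
    have "((\<lambda>t. charge (x t)) has_derivative
        (\<lambda>h. h * (snd ?f * (z \<bullet> fst (x s)) + snd (x s) * (z \<bullet> fst ?f)))) (at s within I)"
      by (simp add: algebra_simps)
    moreover have "x s \<in> PLdom" using sol sI unfolding is_sol_on_def by auto
    ultimately show ?thesis using charge_field by simp
  qed
  then obtain C where "\<forall>s\<in>I. charge (x s) = C"
    using has_derivative_zero_constant[OF fwd_interval_props(2)[OF fI]] by metis
  then have "charge (x t) = charge (x 0)" using tI fwd_interval_props(1)[OF fI] by auto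
  moreover have "x t \<in> PLdom" using sol tI unfolding is_sol_on_def by auto
  ultimately show ?thesis using x0 unfolding PLS_charge by simp
qed

text \<open>The Lyapunov function is \<open>\<parallel>x - x\<^sub>s\<parallel>\<^sub>W\<^sup>2\<close>.  Its decay rests on three estimates near the steady
  state: coercivity of \<open>-\<langle>Lin w, w\<rangle>\<^sub>W + dcon(w)\<^sup>2\<close>, the fact that on \<open>S\<close> the normal component
  \<open>dcon(x - x\<^sub>s)\<close> is quadratically small, and the linear approximation of the field.\<close>
lemma W_bounded: obtains Bw where "Bw > 0" "\<And>w. norm (W w) \<le> Bw * norm w"
  using linear_bounded_pos[OF W_linear] by blast

lemma W_bounded_below: obtains m where "m > 0" "\<And>w. m * norm w \<le> norm (W w)"
proof -
  have "inj W" using linear_injective_0[OF W_linear] W_inj by blast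
  then show ?thesis using linear_inj_bounded_below_pos[OF W_linear] that by blast
qed

text \<open>The form \<open>-\<langle>Lin w, w\<rangle>\<^sub>W + dcon(w)\<^sup>2\<close> is positive definite: on the tangent space by
  definiteness of the linearisation, off it because \<open>dcon w \<noteq> 0\<close>.\<close>
lemma coercive_off_tangent:
  obtains k0 where "k0 > 0" "\<And>w. k0 * (norm w)\<^sup>2 \<le> - (W (Lin w) \<bullet> W w) + (dcon w)\<^sup>2"
proof (rule homogeneous_quadratic_coercive)
  have "continuous_on UNIV Lin" "continuous_on UNIV W" "continuous_on UNIV dcon"
    using Lin_linear W_linear dcon_linear linear_continuous_on linear_conv_bounded_linear by blast+
  then show "continuous_on UNIV (\<lambda>w. - (W (Lin w) \<bullet> W w) + (dcon w)\<^sup>2)"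
    by (intro continuous_intros) (auto intro: continuous_on_compose2)
  show "- (W (Lin (c *\<^sub>R w)) \<bullet> W (c *\<^sub>R w)) + (dcon (c *\<^sub>R w))\<^sup>2 = c\<^sup>2 * (- (W (Lin w) \<bullet> W w) + (dcon w)\<^sup>2)"
    for c w using Lin_linear W_linear dcon_linear by (simp add: linear_scale power2_eq_square algebra_simps)
  show "0 < - (W (Lin w) \<bullet> W w) + (dcon w)\<^sup>2" if "w \<noteq> 0" for w
  proof (cases "dcon w = 0")
    case True then show ?thesis using Lin_negdef_tangent that by simp
  next
    case False then show ?thesis using Lin_nonpos[of w] by (smt (verit) zero_less_power2)
  qed
qed (use that in blast)

text \<open>On \<open>S\<close>, \<open>z \<bullet> c = -z\<^sub>0 A / v\<close>, so \<open>dcon (x - x\<^sub>s) = -z\<^sub>0 A (v - v\<^sub>s)\<^sup>2 / (v v\<^sub>s\<^sup>2)\<close>.\<close>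
lemma dcon_quadratic_on_S:
  assumes xS: "x \<in> PLS z A zi" and small: "norm (x - sst) \<le> vs / 2"
  shows "\<bar>dcon (x - sst)\<bar> \<le> 2 * \<bar>zi\<bar> * A / vs ^ 3 * (norm (x - sst))\<^sup>2"
proof -
  obtain c v where x: "x = (c, v)" by (cases x)
  have vpos: "v > 0" and zc: "z \<bullet> c = - zi * A / v" using xS unfolding x PLS_def PLdom_def
    by (auto simp: eq_neg_iff_add_eq_0)
  have vd: "\<bar>v - vs\<bar> \<le> norm (x - sst)" unfolding x sst_def
    by (metis fst_diff snd_diff norm_snd_le prod.collapse real_norm_def snd_conv)
  then have vlow: "v \<ge> vs / 2" using small by linarith
  have "dcon (x - sst) = z \<bullet> c - z \<bullet> cs - zi * A / vs\<^sup>2 * (v - vs)"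
    unfolding dcon_def x sst_def by (simp add: inner_diff_right)
  also have "\<dots> = - zi * A * (v - vs)\<^sup>2 / (v * vs\<^sup>2)"
    unfolding zc z_cs using vpos vs_pos by (simp add: field_simps power2_eq_square)
  finally have "\<bar>dcon (x - sst)\<bar> = \<bar>zi\<bar> * A * (v - vs)\<^sup>2 / (v * vs\<^sup>2)"
    using A_pos vpos vs_pos by (simp add: abs_mult)
  also have "\<dots> \<le> \<bar>zi\<bar> * A * (v - vs)\<^sup>2 / (vs / 2 * vs\<^sup>2)"
    using vlow vs_pos A_pos by (intro divide_left_mono mult_nonneg_nonneg mult_mono) auto
  also have "\<dots> = 2 * \<bar>zi\<bar> * A / vs ^ 3 * (v - vs)\<^sup>2"
    using vs_pos by (simp add: field_simps power3_eq_cube power2_eq_square)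
  also have "\<dots> \<le> 2 * \<bar>zi\<bar> * A / vs ^ 3 * (norm (x - sst))\<^sup>2"
  proof (rule mult_left_mono)
    show "(v - vs)\<^sup>2 \<le> (norm (x - sst))\<^sup>2" using vd by (metis abs_ge_zero power2_abs power_mono)
  qed (use A_pos vs_pos in simp)
  finally show ?thesis .
qed

lemma dcon_small_on_S:
  assumes k: "0 < k"
  obtains r where "0 < r" "\<And>x. x \<in> PLS z A zi \<Longrightarrow> norm (x - sst) < r \<Longrightarrow>
    (dcon (x - sst))\<^sup>2 \<le> k * (norm (x - sst))\<^sup>2"
proof -
  define Cg where "Cg = 2 * \<bar>zi\<bar> * A / vs ^ 3"
  define r where "r = min (vs / 2) (sqrt (k / (Cg\<^sup>2 + 1)))"
  have Cpos: "0 < Cg\<^sup>2 + 1" by (simp add: add_nonneg_pos)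
  then have r: "0 < r" unfolding r_def using vs_pos k by simp
  have "(dcon (x - sst))\<^sup>2 \<le> k * (norm (x - sst))\<^sup>2"
    if xS: "x \<in> PLS z A zi" and xr: "norm (x - sst) < r" for x
  proof -
    let ?n = "norm (x - sst)"
    have "\<bar>dcon (x - sst)\<bar> \<le> Cg * ?n\<^sup>2"
      unfolding Cg_def using dcon_quadratic_on_S[OF xS] xr unfolding r_def by simp
    then have "(dcon (x - sst))\<^sup>2 \<le> (Cg * ?n\<^sup>2)\<^sup>2"
      by (metis abs_ge_zero power2_abs power_mono)
    also have "\<dots> = Cg\<^sup>2 * ?n\<^sup>2 * ?n\<^sup>2" by (simp add: power2_eq_square)
    also have "\<dots> \<le> Cg\<^sup>2 * ?n\<^sup>2 * (k / (Cg\<^sup>2 + 1))"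
    proof (rule mult_left_mono)
      have "?n < sqrt (k / (Cg\<^sup>2 + 1))" using xr unfolding r_def by simp
      then have "?n\<^sup>2 \<le> (sqrt (k / (Cg\<^sup>2 + 1)))\<^sup>2" by (intro power_mono) auto
      also have "\<dots> = k / (Cg\<^sup>2 + 1)" using k Cpos by simp
      finally show "?n\<^sup>2 \<le> k / (Cg\<^sup>2 + 1)" .
    qed simp
    also have "\<dots> \<le> k * ?n\<^sup>2"
      using k by (simp add: field_simps add_pos_nonneg mult_left_mono)
    finally show ?thesis .
  qed
  then show ?thesis using that r by blast
qed

lemma field_dissipative_on_S:
  obtains r0 k1 where "r0 > 0" "k1 > 0"
    "\<And>x. x \<in> PLS z A zi \<Longrightarrow> norm (x - sst) < r0 \<Longrightarrow>
       W (PLfield z ce A L p zeta x) \<bullet> W (x - sst) \<le> - k1 * (norm (x - sst))\<^sup>2"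
proof -
  obtain Bw where Bw: "Bw > 0" "\<And>w. norm (W w) \<le> Bw * norm w"
    using W_bounded by blast
  obtain k0 where k0: "k0 > 0" "\<And>w. k0 * (norm w)\<^sup>2 \<le> - (W (Lin w) \<bullet> W w) + (dcon w)\<^sup>2"
    using coercive_off_tangent by blast
  define e where "e = k0 / (4 * Bw\<^sup>2)"
  have epos: "e > 0" unfolding e_def using k0 Bw by simp
  then obtain r1 where r1: "r1 > 0" "\<And>y. norm (y - sst) < r1 \<Longrightarrow>
      norm (PLfield z ce A L p zeta y - Lin (y - sst)) \<le> e * norm (y - sst)"
    using field_deriv unfolding has_derivative_at_alt field_sst by force
  obtain r2 where r2: "r2 > 0" "\<And>x. x \<in> PLS z A zi \<Longrightarrow> norm (x - sst) < r2 \<Longrightarrow>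
      (dcon (x - sst))\<^sup>2 \<le> k0 / 4 * (norm (x - sst))\<^sup>2"
    using dcon_small_on_S[of "k0 / 4"] k0 by auto
  have "W (PLfield z ce A L p zeta x) \<bullet> W (x - sst) \<le> - (k0 / 2) * (norm (x - sst))\<^sup>2"
    if xS: "x \<in> PLS z A zi" and xr: "norm (x - sst) < min r1 r2" for x
  proof -
    define w where "w = x - sst"
    define E where "E = PLfield z ce A L p zeta x - Lin w"
    have "W E \<bullet> W w \<le> norm (W E) * norm (W w)" by (rule norm_cauchy_schwarz)
    also have "\<dots> \<le> (Bw * (e * norm w)) * (Bw * norm w)"
      using Bw epos r1(2)[of x] xr unfolding E_def w_def
      by (intro mult_mono order_trans[OF Bw(2)] mult_left_mono) auto
    also have "\<dots> = k0 / 4 * (norm w)\<^sup>2" unfolding e_def using Bw(1) by (simp add: field_simps power2_eq_square)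
    finally have "W E \<bullet> W w \<le> k0 / 4 * (norm w)\<^sup>2" .
    moreover have "W (Lin w) \<bullet> W w \<le> - k0 * (norm w)\<^sup>2 + k0 / 4 * (norm w)\<^sup>2"
      using k0(2)[of w] r2(2)[OF xS] xr unfolding w_def by fastforce
    moreover have "W (PLfield z ce A L p zeta x) = W (Lin w) + W E"
      unfolding E_def using W_linear by (simp add: linear_add[symmetric])
    ultimately show ?thesis unfolding w_def[symmetric] by (simp add: inner_add_left)
  qed
  moreover have "0 < min r1 r2" "0 < k0 / 2" using r1 r2 k0 by simp_all
  ultimately show ?thesis using that by blast
qed

lemma lyapunov_deriv:
  assumes xd: "(x has_vector_derivative PLfield z ce A L p zeta (x t)) (at t within I)"
  shows "((\<lambda>t. W (x t - sst) \<bullet> W (x t - sst)) has_real_derivative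
           2 * (W (PLfield z ce A L p zeta (x t)) \<bullet> W (x t - sst))) (at t within I)"
proof -
  let ?v = "PLfield z ce A L p zeta (x t)"
  have bW: "bounded_linear W" using W_linear linear_conv_bounded_linear by blast
  have "((\<lambda>t. W (x t - sst)) has_derivative (\<lambda>h. W (h *\<^sub>R ?v))) (at t within I)"
    using xd unfolding has_vector_derivative_def
    by (intro bounded_linear.has_derivative[OF bW] derivative_eq_intros) auto
  from has_derivative_inner[OF this this]
  have "((\<lambda>t. W (x t - sst) \<bullet> W (x t - sst)) has_derivative
      (\<lambda>h. W (x t - sst) \<bullet> W (h *\<^sub>R ?v) + W (h *\<^sub>R ?v) \<bullet> W (x t - sst))) (at t within I)" .
  moreover have "(\<lambda>h. W (x t - sst) \<bullet> W (h *\<^sub>R ?v) + W (h *\<^sub>R ?v) \<bullet> W (x t - sst))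
      = (*) (2 * (W ?v \<bullet> W (x t - sst)))"
    by (rule ext) (simp add: linear_scale[OF W_linear] inner_commute algebra_simps)
  ultimately show ?thesis unfolding has_field_derivative_def by simp
qed

lemma field_dissipative_W:
  obtains \<rho> \<kappa> where "\<rho> > 0" "\<kappa> > 0"
    "\<And>x. x \<in> PLS z A zi \<Longrightarrow> (norm (W (x - sst)))\<^sup>2 < \<rho> \<Longrightarrow>
      2 * (W (PLfield z ce A L p zeta x) \<bullet> W (x - sst)) \<le> - \<kappa> * (norm (W (x - sst)))\<^sup>2"
proof -
  obtain r0 k1 where r0: "r0 > 0" "k1 > 0"
    "\<And>x. x \<in> PLS z A zi \<Longrightarrow> norm (x - sst) < r0 \<Longrightarrow>
       W (PLfield z ce A L p zeta x) \<bullet> W (x - sst) \<le> - k1 * (norm (x - sst))\<^sup>2"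
    using field_dissipative_on_S by blast
  obtain Bw where Bw: "Bw > 0" "\<And>w. norm (W w) \<le> Bw * norm w"
    using W_bounded by blast
  obtain m where m: "m > 0" "\<And>w. m * norm w \<le> norm (W w)"
    using W_bounded_below by blast
  define \<kappa> where "\<kappa> = 2 * k1 / Bw\<^sup>2"
  have kpos: "\<kappa> > 0" unfolding \<kappa>_def using r0 Bw by simp
  have "2 * (W (PLfield z ce A L p zeta x) \<bullet> W (x - sst)) \<le> - \<kappa> * (norm (W (x - sst)))\<^sup>2"
    if xS: "x \<in> PLS z A zi" and Vx: "(norm (W (x - sst)))\<^sup>2 < (m * r0)\<^sup>2" for x
  proof -
    let ?n = "norm (x - sst)"
    have "norm (W (x - sst)) < m * r0"
      using Vx by (rule power2_less_imp_less) (use m(1) r0(1) in simp)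
    then have "m * ?n < m * r0" by (rule le_less_trans[OF m(2)])
    then have "?n < r0" using m(1) by simp
    then have "W (PLfield z ce A L p zeta x) \<bullet> W (x - sst) \<le> - k1 * ?n\<^sup>2"
      using r0(3) xS by blast
    moreover have "(norm (W (x - sst)))\<^sup>2 \<le> (Bw * ?n)\<^sup>2" using Bw(2) by (intro power_mono) auto
    then have "\<kappa> * (norm (W (x - sst)))\<^sup>2 \<le> \<kappa> * (Bw * ?n)\<^sup>2" using kpos by (intro mult_left_mono) auto
    moreover have "\<kappa> * (Bw * ?n)\<^sup>2 = 2 * k1 * ?n\<^sup>2"
      unfolding \<kappa>_def using Bw(1) by (simp add: power_mult_distrib)
    ultimately show ?thesis by linarith
  qed
  moreover have "(m * r0)\<^sup>2 > 0" using m r0 by simp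
  ultimately show ?thesis using that kpos by blast
qed

text \<open>Hence \<open>V\<close> decays exponentially along solutions starting on \<open>S\<close> with \<open>V\<close> small: the
  solution stays on \<open>S\<close>, and \<open>V' \<le> -\<kappa> V\<close> while \<open>V\<close> stays small.\<close>
lemma lyapunov_decay:
  obtains \<rho> \<kappa> where "\<rho> > 0" "\<kappa> > 0"
    "\<And>I x t. fwd_interval I \<Longrightarrow> is_sol_on (PLfield z ce A L p zeta) PLdom I x \<Longrightarrow>
      x 0 \<in> PLS z A zi \<Longrightarrow> (norm (W (x 0 - sst)))\<^sup>2 < \<rho> \<Longrightarrow> t \<in> I \<Longrightarrow>
      (norm (W (x t - sst)))\<^sup>2 \<le> (norm (W (x 0 - sst)))\<^sup>2 * exp (- \<kappa> * t)"
proof -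
  obtain \<rho> \<kappa> where \<rho>: "\<rho> > 0" "\<kappa> > 0"
    "\<And>x. x \<in> PLS z A zi \<Longrightarrow> (norm (W (x - sst)))\<^sup>2 < \<rho> \<Longrightarrow>
      2 * (W (PLfield z ce A L p zeta x) \<bullet> W (x - sst)) \<le> - \<kappa> * (norm (W (x - sst)))\<^sup>2"
    using field_dissipative_W by blast
  have "(norm (W (x t - sst)))\<^sup>2 \<le> (norm (W (x 0 - sst)))\<^sup>2 * exp (- \<kappa> * t)"
    if fI: "fwd_interval I" and sol: "is_sol_on (PLfield z ce A L p zeta) PLdom I x"
      and x0: "x 0 \<in> PLS z A zi" and V0: "(norm (W (x 0 - sst)))\<^sup>2 < \<rho>" and tI: "t \<in> I"
    for I x t
  proof -
    define V where "V t = (norm (W (x t - sst)))\<^sup>2" for t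
    have der: "(V has_real_derivative 2 * (W (PLfield z ce A L p zeta (x s)) \<bullet> W (x s - sst))) (at s within I)"
      if "s \<in> I" for s
      unfolding V_def power2_norm_eq_inner
      by (rule lyapunov_deriv) (use sol that in \<open>auto simp: is_sol_on_def\<close>)
    have dec: "2 * (W (PLfield z ce A L p zeta (x s)) \<bullet> W (x s - sst)) \<le> - \<kappa> * V s"
      if "s \<in> I" "V s < \<rho>" for s
      using \<rho>(3) solution_stays_in_S[OF fI sol x0 that(1)] that(2) unfolding V_def by blast
    have "V t \<le> V 0 * exp (- \<kappa> * t)"
      by (intro lyapunov_exp_decay[OF fI der dec] \<rho>(2) tI) (use V0 in \<open>simp_all add: V_def\<close>)
    then show ?thesis unfolding V_def .
  qed
  then show ?thesis using that \<rho>(1,2) by blast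
qed

lemma steady_state_exp_bound:
  obtains \<delta> C \<kappa> where "\<delta> > 0" "\<kappa> > 0" "C \<ge> 0"
    "exp_bound_on (PLfield z ce A L p zeta) PLdom (PLS z A zi) sst \<delta> C \<kappa>"
proof -
  obtain \<rho> \<kappa> where \<rho>: "\<rho> > 0" "\<kappa> > 0"
    "\<And>I x t. fwd_interval I \<Longrightarrow> is_sol_on (PLfield z ce A L p zeta) PLdom I x \<Longrightarrow>
      x 0 \<in> PLS z A zi \<Longrightarrow> (norm (W (x 0 - sst)))\<^sup>2 < \<rho> \<Longrightarrow> t \<in> I \<Longrightarrow>
      (norm (W (x t - sst)))\<^sup>2 \<le> (norm (W (x 0 - sst)))\<^sup>2 * exp (- \<kappa> * t)"
    using lyapunov_decay by blast
  obtain Bw where Bw: "Bw > 0" "\<And>w. norm (W w) \<le> Bw * norm w"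
    using W_bounded by blast
  obtain m where m: "m > 0" "\<And>w. m * norm w \<le> norm (W w)"
    using W_bounded_below by blast
  define \<delta> where "\<delta> = sqrt \<rho> / Bw"
  have dpos: "\<delta> > 0" unfolding \<delta>_def using \<rho> Bw by simp
  have "dist (x t) sst \<le> (Bw / m) * exp (- (\<kappa> / 2) * t) * dist (x 0) sst"
    if fI: "fwd_interval I" and sol: "is_sol_on (PLfield z ce A L p zeta) PLdom I x"
      and x0: "x 0 \<in> PLS z A zi" and d0: "dist (x 0) sst < \<delta>" and tI: "t \<in> I" for I x t
  proof -
    have "Bw * norm (x 0 - sst) < Bw * \<delta>" using d0 Bw(1) by (simp add: dist_norm)
    then have "norm (W (x 0 - sst)) < sqrt \<rho>"
      using Bw(2)[of "x 0 - sst"] Bw(1) unfolding \<delta>_def by simp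
    then have "(norm (W (x 0 - sst)))\<^sup>2 < (sqrt \<rho>)\<^sup>2" by (intro power_strict_mono) auto
    then have "(norm (W (x 0 - sst)))\<^sup>2 < \<rho>" using \<rho>(1) by simp
    note decay = \<rho>(3)[OF fI sol x0 this tI]
    have "(m * norm (x t - sst))\<^sup>2 \<le> (norm (W (x t - sst)))\<^sup>2"
      using m by (intro power_mono) auto
    also have "\<dots> \<le> (norm (W (x 0 - sst)))\<^sup>2 * exp (- \<kappa> * t)" by (rule decay)
    also have "\<dots> \<le> (Bw * norm (x 0 - sst))\<^sup>2 * exp (- \<kappa> * t)"
      using Bw by (intro mult_right_mono power_mono) auto
    also have "\<dots> = (Bw * norm (x 0 - sst) * exp (- (\<kappa> / 2) * t))\<^sup>2"
      by (simp add: power_mult_distrib power2_eq_square exp_add[symmetric])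
    finally have "m * norm (x t - sst) \<le> Bw * norm (x 0 - sst) * exp (- (\<kappa> / 2) * t)"
      by (rule power2_le_imp_le) (use Bw(1) in simp)
    then have "norm (x t - sst) \<le> Bw * norm (x 0 - sst) * exp (- (\<kappa> / 2) * t) / m"
      using m(1) by (simp add: pos_le_divide_eq mult.commute)
    also have "\<dots> = (Bw / m) * exp (- (\<kappa> / 2) * t) * norm (x 0 - sst)" by simp
    finally show ?thesis by (simp add: dist_norm)
  qed
  then have "exp_bound_on (PLfield z ce A L p zeta) PLdom (PLS z A zi) sst \<delta> (Bw / m) (\<kappa> / 2)"
    unfolding exp_bound_on_def by blast
  moreover have "\<kappa> / 2 > 0" "Bw / m \<ge> 0" using \<rho> Bw m by simp_all
  ultimately show ?thesis using that dpos by blast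
qed

end

theorem proposition5:
  fixes z ce p :: "real^'n" and L :: "real^'n^'n" and A zi zeta :: real
  assumes N2: "CARD('n) \<ge> 2"
    and z_nz: "z \<noteq> 0"
    and ce_pos: "\<forall>k. 0 < ce $ k"
    and ce_neutral: "(\<Sum>k\<in>UNIV. z $ k * ce $ k) = 0"
    and A_pos: "0 < A"
    and L_sym: "transpose L = L"
    and L_pd: "\<forall>x. x \<noteq> 0 \<longrightarrow> 0 < x \<bullet> (L *v x)"
    and zeta_pos: "0 < zeta"
    and fmin_neg: "fPL z ce L p (phi_min z ce L p) < 0"
  shows "\<exists>s. PLsteady z ce A zi L p s
           \<and> (\<forall>s'. PLsteady z ce A zi L p s' \<longrightarrow> s' = s)
           \<and> asymp_stable_on (PLfield z ce A L p zeta) PLdom (PLS z A zi) s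
           \<and> exp_convergent_on (PLfield z ce A L p zeta) PLdom (PLS z A zi) s
           \<and> (\<exists>F'. (PLfield z ce A L p zeta has_derivative F') (at s)
                  \<and> diag_neg_on F' (PLtangent z A zi s))"
proof -
  interpret pump_leak z ce p L A zi zeta
    using z_nz ce_pos ce_neutral A_pos L_sym L_pd zeta_pos fmin_neg by unfold_locales blast+
  obtain \<delta> C \<kappa> where pos: "\<delta> > 0" "\<kappa> > 0" "C \<ge> 0"
    and bnd: "exp_bound_on (PLfield z ce A L p zeta) PLdom (PLS z A zi) sst \<delta> C \<kappa>"
    using steady_state_exp_bound by blast
  show ?thesis
  proof (intro exI[of _ sst] conjI allI impI)
    show "PLsteady z ce A zi L p sst" by (rule steady)
    show "s' = sst" if "PLsteady z ce A zi L p s'" for s' using that by (rule steady_unique)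
    show "asymp_stable_on (PLfield z ce A L p zeta) PLdom (PLS z A zi) sst"
      by (rule exp_bound_imp_asymp_stable[OF bnd pos])
    show "exp_convergent_on (PLfield z ce A L p zeta) PLdom (PLS z A zi) sst"
      by (rule exp_bound_imp_exp_convergent[OF bnd pos(1,2)])
    show "\<exists>F'. (PLfield z ce A L p zeta has_derivative F') (at sst) \<and> diag_neg_on F' (PLtangent z A zi sst)"
      using field_deriv Lin_diagonalizable by blast
  qed
qed

end
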